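(* $\mathcal{M}_1$ equals the weak*-closed convex hull of $\mathcal{Q}_1$.
   Context: $L^{\infty}(\mathbb{R}_+)$: real-valued essentially bounded measurable functions on $[0,\infty)$. $\mathcal{M}_1$ is the set of positive linear functionals $\varphi$ on $L^{\infty}(\mathbb{R}_+)$ with $\varphi(1)=1$ and $\varphi(f)\le\lim_{\theta\to\infty}\limsup_{x\to\infty}\frac1\theta\int_x^{x+\theta}f(t)\,dt$ for all $f$. Let $\beta\mathbb{N}_0$ be the Stone–Čech compactification of $\mathbb{N}_0$ (points = ultrafilters), $\tau$ the extension of $n\mapsto n+1$, $\Omega=(\beta\mathbb{N}_0\times[0,1])/\sim$ with $(\tau\eta,0)\sim(\eta,1)$, containing $\mathbb{R}_+$ via $(n,t)\mapsto n+t$, and $\Omega^*=\Omega\setminus\mathbb{R}_+$ with flow $\tau^s(\eta,t)=(\tau^{[t+s]}\eta,t+s-[t+s])$. Each $\omega=(\eta,t)$ is identified with the ultrafilter $\{A+t:A\in\eta\}$ on $\mathbb{R}_+$. For $f\in L^{\infty}(\mathbb{R}_+)$, $f_s(x)=f(x+s)$ and $f_\omega=\omega\text{-}\lim_sf_s$ (weak* limit in $L^{\infty}(\mathbb{R}_+)=L^1(\mathbb{R}_+)^*$ along $\omega$), extended to $\mathbb{R}$ by $f_\omega(x)=f_{\tau^{-N}\omega}(N+x)$ for $x\in[-N,0]$. $\mathcal{Q}_1$ is the set of all functionals $f\mapsto\mathcal{U}\text{-}\lim_x\frac1x\int_0^xf_\omega(t)\,dt$ on $L^{\infty}(\mathbb{R}_+)$,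 where $\omega\in\Omega^*$ and $\mathcal{U}$ is an ultrafilter on $\mathbb{R}_+$ containing no bounded set. *)

theory Defs
  imports "HOL-Analysis.Analysis"
begin

text \<open>Elements of L-infinity of the half line are represented by functions real => real;
  only their values on [0,inf) matter (up to Lebesgue-null sets).\<close>
definition Linf :: "(real \<Rightarrow> real) set" where
  "Linf = {f. set_borel_measurable lebesgue {0..} f \<and>
              (\<exists>C. AE x in lebesgue. x \<ge> 0 \<longrightarrow> \<bar>f x\<bar> \<le> C)}"

definition ultrafilter :: "'a filter \<Rightarrow> bool" where
  "ultrafilter F \<longleftrightarrow> F \<noteq> bot \<and> (\<forall>P. eventually P F \<or> eventually (\<lambda>x. \<not> P x) F)"

definition upper_mean :: "(real \<Rightarrow> real) \<Rightarrow> ereal" where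
  "upper_mean f = Lim at_top (\<lambda>\<theta>::real. Limsup at_top
      (\<lambda>x::real. ereal ((1 / \<theta>) * (LINT t:{x..x+\<theta>}|lebesgue. f t))))"

text \<open>The set M_1.  Functionals are maps on representatives; they are required to vanish
  off Linf (a canonical normalisation), be linear and positive on Linf.\<close>
definition M1 :: "((real \<Rightarrow> real) \<Rightarrow> real) set" where
  "M1 = {\<phi>. (\<forall>f. f \<notin> Linf \<longrightarrow> \<phi> f = 0)
          \<and> (\<forall>f\<in>Linf. \<forall>g\<in>Linf. \<phi> (\<lambda>x. f x + g x) = \<phi> f + \<phi> g)
          \<and> (\<forall>f\<in>Linf. \<forall>c::real. \<phi> (\<lambda>x. c * f x) = c * \<phi> f)
          \<and> (\<forall>f\<in>Linf. (AE x in lebesgue. x \<ge> 0 \<longrightarrow> f x \<ge> 0) \<longrightarrow> \<phi> f \<ge> 0)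
          \<and> \<phi> (\<lambda>_. 1) = 1
          \<and> (\<forall>f\<in>Linf. ereal (\<phi> f) \<le> upper_mean f)}"

text \<open>The point omega = (eta, t) of Omega*, viewed as the ultrafilter {A + t : A in eta}
  on the half line, i.e. the image of eta under n |-> n + t.\<close>
definition omega_filter :: "nat filter \<Rightarrow> real \<Rightarrow> real filter" where
  "omega_filter \<eta> t = filtermap (\<lambda>n. real n + t) \<eta>"

text \<open>h is the weak* limit (in L-infinity = dual of L^1 of the half line) of the
  translates f_s along the filter F.\<close>
definition weak_star_lim :: "real filter \<Rightarrow> (real \<Rightarrow> real) \<Rightarrow> (real \<Rightarrow> real) \<Rightarrow> bool" where
  "weak_star_lim F f h \<longleftrightarrow> h \<in> Linf \<and>
     (\<forall>g. set_integrable lebesgue {0..} g \<longrightarrow>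
        ((\<lambda>s. LINT y:{0..}|lebesgue. f (y + s) * g y) \<longlongrightarrow>
           (LINT y:{0..}|lebesgue. h y * g y)) F)"

definition f_omega :: "nat filter \<Rightarrow> real \<Rightarrow> (real \<Rightarrow> real) \<Rightarrow> (real \<Rightarrow> real)" where
  "f_omega \<eta> t f = (SOME h. weak_star_lim (omega_filter \<eta> t) f h)"

definition qfun :: "nat filter \<Rightarrow> real \<Rightarrow> real filter \<Rightarrow> (real \<Rightarrow> real) \<Rightarrow> real" where
  "qfun \<eta> t U f = (if f \<in> Linf then
      Lim U (\<lambda>x. (1 / x) * (LINT s:{0..x}|lebesgue. f_omega \<eta> t f s)) else 0)"

text \<open>Omega* = points (eta, t) with eta a free ultrafilter on N_0 and t in [0,1);
  U ranges over ultrafilters on the half line containing no bounded set (i.e. U <= at_top).\<close>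
definition Q1 :: "((real \<Rightarrow> real) \<Rightarrow> real) set" where
  "Q1 = {qfun \<eta> t U | \<eta> t U. ultrafilter \<eta> \<and> \<eta> \<le> sequentially \<and> 0 \<le> t \<and> t < 1
                          \<and> ultrafilter U \<and> U \<le> at_top}"

definition conv_comb :: "((real \<Rightarrow> real) \<Rightarrow> real) set \<Rightarrow> ((real \<Rightarrow> real) \<Rightarrow> real) set" where
  "conv_comb S = {(\<lambda>f. \<Sum>i<n. c i * \<phi>s i f) | (n::nat) c \<phi>s.
       (\<forall>i<n. 0 \<le> c i \<and> \<phi>s i \<in> S) \<and> (\<Sum>i<n. c i) = 1}"

text \<open>Weak* closure (topology of pointwise convergence on Linf), among functionals
  normalised to vanish off Linf.\<close>
definition wstar_closure :: "((real \<Rightarrow> real) \<Rightarrow> real) set \<Rightarrow> ((real \<Rightarrow> real) \<Rightarrow> real) set" where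
  "wstar_closure S = {\<psi>. (\<forall>f. f \<notin> Linf \<longrightarrow> \<psi> f = 0) \<and>
      (\<forall>F. finite F \<and> F \<subseteq> Linf \<longrightarrow> (\<forall>\<epsilon>>0. \<exists>\<phi>\<in>S. \<forall>f\<in>F. \<bar>\<phi> f - \<psi> f\<bar> < \<epsilon>))}"

end

(* Every functional of Q1 is linear, positive, normalised and bounded by the upper mean, so Q1 is
   contained in M1, which is convex and weak*-closed. Conversely, by separation in finitely many
   coordinates it suffices that for every bounded f some q in Q1 has q f >= upper_mean f.
   Such a q comes from a rising-sun argument: there are integers n_k -> oo from which the
   primitive of f grows with slope almost M = upper_mean f on windows of length k. For an
   ultrafilter eta containing these n_k and omega = (eta, 0), the primitive of f_omega is then
   bounded below by M x - K, so every Cesaro limit of f_omega is at least M. The weak* limits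
   f_omega exist because bounded families of densities converge along ultrafilters, by
   Radon-Nikodym applied to the limiting set function. *)

theory Submission
  imports Defs
begin

section \<open>Ultrafilters\<close>

lemma ultrafilter_filtermap:
  assumes "ultrafilter F" shows "ultrafilter (filtermap h F)"
  using assms unfolding ultrafilter_def by (auto simp: eventually_filtermap filtermap_bot_iff)

lemma ultrafilter_tendsto_Icc:
  fixes g :: "'a \<Rightarrow> real"
  assumes F: "ultrafilter F" and ev: "eventually (\<lambda>x. g x \<in> {a..b}) F"
  obtains L where "L \<in> {a..b}" "(g \<longlongrightarrow> L) F"
proof -
  have "filtermap g F \<noteq> bot" using F unfolding ultrafilter_def by (simp add: filtermap_bot_iff)
  moreover have "eventually (\<lambda>x. x \<in> {a..b}) (filtermap g F)" using ev by (simp add: eventually_filtermap)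
  ultimately obtain L where L: "L \<in> {a..b}" "inf (nhds L) (filtermap g F) \<noteq> bot"
    using compact_Icc[of a b] unfolding compact_filter by blast
  have "filtermap g F \<le> nhds L"
  proof (rule filter_leI)
    fix P assume P: "eventually P (nhds L)"
    show "eventually P (filtermap g F)"
    proof (rule ccontr)
      assume "\<not> eventually P (filtermap g F)"
      then have "eventually (\<lambda>y. \<not> P y) (filtermap g F)"
        using ultrafilter_filtermap[OF F] unfolding ultrafilter_def by blast
      with P have "eventually (\<lambda>y. False) (inf (nhds L) (filtermap g F))"
        unfolding eventually_inf by blast
      with L(2) show False by (simp add: eventually_False)
    qed
  qed
  then show thesis using L(1) that by (simp add: filterlim_def)
qed

lemma Inf_filter_chain_neq_bot:
  fixes C :: "'a filter set"
  assumes C: "C \<noteq> {}" "bot \<notin> C" and lin: "\<And>G H. G \<in> C \<Longrightarrow> H \<in> C \<Longrightarrow> G \<le> H \<or> H \<le> G"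
  shows "Inf C \<noteq> bot"
proof -
  have ev: "eventually P (Inf C) \<longleftrightarrow> (\<exists>G\<in>C. eventually P G)" for P
    by (rule eventually_Inf_base[OF C(1)]) (metis inf.absorb1 inf.absorb2 lin order_refl)
  have "\<not> eventually (\<lambda>_. False) G" if "G \<in> C" for G
    using that C(2) eventually_False[of G] by auto
  then have "\<not> eventually (\<lambda>_. False) (Inf C)" using ev[of "\<lambda>_. False"] by blast
  then show ?thesis by auto
qed

lemma ultrafilter_if_maximal:
  assumes M: "M \<noteq> bot" and max: "\<And>G. G \<noteq> bot \<Longrightarrow> G \<le> M \<Longrightarrow> G = M"
  shows "ultrafilter M"
  unfolding ultrafilter_def
proof (intro conjI allI M disjCI)
  fix P assume "\<not> eventually (\<lambda>x. \<not> P x) M"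
  then have "\<not> eventually (\<lambda>x. False) (inf M (principal {x. P x}))"
    unfolding eventually_inf_principal by simp
  then have "inf M (principal {x. P x}) \<noteq> bot" by auto
  then have "inf M (principal {x. P x}) = M" by (rule max) simp
  moreover have "eventually P (inf M (principal {x. P x}))"
    unfolding eventually_inf_principal by simp
  ultimately show "eventually P M" by simp
qed

lemma ultrafilter_exists_le:
  fixes F :: "'a filter"
  assumes "F \<noteq> bot"
  obtains U where "ultrafilter U" "U \<le> F"
proof -
  define A where "A = {G. G \<noteq> bot \<and> G \<le> F}"
  have "\<exists>M\<in>A. \<forall>G\<in>A. G \<le> M \<longrightarrow> G = M"
  proof (rule predicate_Zorn[where P = "\<lambda>G H. H \<le> G"])
    show "partial_order_on A (relation_of (\<lambda>G H. H \<le> G) A)"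
      by (rule partial_order_on_relation_ofI) (simp_all add: order_antisym)
  next
    fix C assume C: "C \<in> Chains (relation_of (\<lambda>G H. H \<le> G) A)"
    show "\<exists>u\<in>A. \<forall>G\<in>C. u \<le> G"
    proof (cases "C = {}")
      case True
      with assms show ?thesis unfolding A_def by auto
    next
      case False
      have CA: "C \<subseteq> A" and lin: "\<And>G H. G \<in> C \<Longrightarrow> H \<in> C \<Longrightarrow> G \<le> H \<or> H \<le> G"
        using C unfolding Chains_def relation_of_def by auto
      have "Inf C \<noteq> bot" using CA unfolding A_def by (intro Inf_filter_chain_neq_bot[OF False _ lin]) auto
      moreover have "Inf C \<le> F" using False CA unfolding A_def by (auto intro: Inf_lower2)
      ultimately show ?thesis unfolding A_def by (auto intro: Inf_lower)
    qed
  qed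
  then obtain M where M: "M \<noteq> bot" "M \<le> F" and max: "\<And>G. G \<noteq> bot \<Longrightarrow> G \<le> M \<Longrightarrow> G = M"
    unfolding A_def by (metis (mono_tags, lifting) mem_Collect_eq order_trans)
  from ultrafilter_if_maximal[OF M(1) max] M(2) show thesis by (rule that)
qed

section \<open>Essentially bounded functions and their primitives\<close>

lemma LinfE:
  assumes "f \<in> Linf"
  obtains C where "C \<ge> 0" "AE x in lebesgue. 0 \<le> x \<longrightarrow> \<bar>f x\<bar> \<le> C"
proof -
  obtain C where "AE x in lebesgue. 0 \<le> x \<longrightarrow> \<bar>f x\<bar> \<le> C" using assms unfolding Linf_def by auto
  then have "AE x in lebesgue. 0 \<le> x \<longrightarrow> \<bar>f x\<bar> \<le> max C 0" by eventually_elim auto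
  then show thesis by (rule that[rotated]) simp
qed

lemma Linf_measurable:
  assumes "f \<in> Linf" shows "(\<lambda>x. indicator {0..} x * f x) \<in> borel_measurable lebesgue"
  using assms unfolding Linf_def set_borel_measurable_def by simp

lemma LinfI:
  assumes "(\<lambda>x. indicator {0..} x * f x) \<in> borel_measurable lebesgue"
    and "AE x in lebesgue. 0 \<le> x \<longrightarrow> \<bar>f x\<bar> \<le> C"
  shows "f \<in> Linf"
  using assms unfolding Linf_def set_borel_measurable_def by auto

lemma Linf_add:
  assumes f: "f \<in> Linf" and g: "g \<in> Linf" shows "(\<lambda>x. f x + g x) \<in> Linf"
proof -
  obtain C1 where "AE x in lebesgue. 0 \<le> x \<longrightarrow> \<bar>f x\<bar> \<le> C1" using LinfE[OF f] by metis
  moreover obtain C2 where "AE x in lebesgue. 0 \<le> x \<longrightarrow> \<bar>g x\<bar> \<le> C2" using LinfE[OF g] by metis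
  ultimately have "AE x in lebesgue. 0 \<le> x \<longrightarrow> \<bar>f x + g x\<bar> \<le> C1 + C2" by eventually_elim auto
  moreover have "(\<lambda>x. indicator {0..} x * (f x + g x)) \<in> borel_measurable lebesgue"
    using Linf_measurable[OF f] Linf_measurable[OF g] by (simp add: distrib_left)
  ultimately show ?thesis by (intro LinfI)
qed

lemma Linf_cmult:
  assumes f: "f \<in> Linf" shows "(\<lambda>x. c * f x) \<in> Linf"
proof -
  obtain C where "AE x in lebesgue. 0 \<le> x \<longrightarrow> \<bar>f x\<bar> \<le> C" using LinfE[OF f] by metis
  then have "AE x in lebesgue. 0 \<le> x \<longrightarrow> \<bar>c * f x\<bar> \<le> \<bar>c\<bar> * C"
    by eventually_elim (simp add: abs_mult mult_left_mono)
  moreover have "(\<lambda>x. indicator {0..} x * (c * f x)) \<in> borel_measurable lebesgue"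
    using borel_measurable_times[OF borel_measurable_const[of c] Linf_measurable[OF f]]
    by (simp add: mult.left_commute)
  ultimately show ?thesis by (intro LinfI)
qed

lemma Linf_const: "(\<lambda>x. c) \<in> Linf"
  by (rule LinfI[where C = "\<bar>c\<bar>"]) (auto intro!: borel_measurable_times borel_measurable_indicator)

lemma Linf_sum:
  "finite I \<Longrightarrow> (\<And>i. i \<in> I \<Longrightarrow> g i \<in> Linf) \<Longrightarrow> (\<lambda>x. \<Sum>i\<in>I. c i * g i x) \<in> Linf"
proof (induction I rule: finite_induct)
  case empty then show ?case using Linf_const[of 0] by simp
next
  case (insert i I)
  then show ?case using Linf_add[OF Linf_cmult[of "g i" "c i"], of "\<lambda>x. \<Sum>i\<in>I. c i * g i x"] by simp
qed

lemma AE_nonneg_shift: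
  fixes s :: real
  assumes P: "AE x in lebesgue. 0 \<le> x \<longrightarrow> P x" and s: "0 \<le> s"
  shows "AE x in lebesgue. 0 \<le> x \<longrightarrow> P (x + s)"
proof -
  obtain N where N: "{x \<in> space lborel. \<not> (0 \<le> x \<longrightarrow> P x)} \<subseteq> N" "N \<in> null_sets lborel"
    using AE_E[OF P[unfolded AE_completion_iff]] null_setsI by metis
  have "0 \<le> x \<longrightarrow> P (x + s)" if "x \<notin> {x. x - (- s) \<in> N}" for x
  proof
    assume "0 \<le> x"
    moreover have "x + s \<notin> {x \<in> space lborel. \<not> (0 \<le> x \<longrightarrow> P x)}" using that N(1) by auto
    ultimately show "P (x + s)" using s by simp
  qed
  then have "AE x in lborel. 0 \<le> x \<longrightarrow> P (x + s)"
    by (intro AE_I'[OF null_sets_translation[OF N(2), of "- s"]]) auto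
  then show ?thesis by (simp add: AE_completion_iff)
qed

lemma Linf_shift:
  assumes f: "f \<in> Linf" and s: "0 \<le> s" shows "(\<lambda>y. f (y + s)) \<in> Linf"
proof -
  obtain C where "AE x in lebesgue. 0 \<le> x \<longrightarrow> \<bar>f x\<bar> \<le> C" using LinfE[OF f] by metis
  then have "AE x in lebesgue. 0 \<le> x \<longrightarrow> \<bar>f (x + s)\<bar> \<le> C" using s by (rule AE_nonneg_shift)
  moreover have "(\<lambda>y. indicator {0..} y * f (y + s)) \<in> borel_measurable lebesgue"
  proof -
    have T: "(\<lambda>y::real. s + 1 * y) \<in> lebesgue \<rightarrow>\<^sub>M lebesgue"
      using lebesgue_affine_measurable[where c = "\<lambda>x::real. 1" and t = s] by simp
    have "(\<lambda>y. indicator {0..} y * (indicator {0..} (s + 1 * y) * f (s + 1 * y))) \<in> borel_measurable lebesgue"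
      by (intro borel_measurable_times[OF _ measurable_compose[OF T Linf_measurable[OF f]]]
          borel_measurable_indicator) auto
    also have "(\<lambda>y. indicator {0..} y * (indicator {0..} (s + 1 * y) * f (s + 1 * y))) =
        (\<lambda>y. indicator {0..} y * f (y + s))"
      using s by (auto simp: indicator_def add.commute)
    finally show ?thesis .
  qed
  ultimately show ?thesis by (intro LinfI)
qed

lemma set_integrable_Linf:
  assumes f: "f \<in> Linf" and S: "S \<in> sets lebesgue" "S \<subseteq> {0..}" "emeasure lebesgue S < \<infinity>"
  shows "set_integrable lebesgue S f"
proof -
  obtain C where C: "AE x in lebesgue. 0 \<le> x \<longrightarrow> \<bar>f x\<bar> \<le> C" using LinfE[OF f] by metis
  have "set_integrable lebesgue S (\<lambda>x. C)"
    unfolding set_integrable_def using integrable_real_indicator[OF S(1) S(3)]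
    by (intro integrable_scaleR_left) simp
  moreover have "set_borel_measurable lebesgue S f"
  proof -
    have "(\<lambda>x. indicator S x * (indicator {0..} x * f x)) \<in> borel_measurable lebesgue"
      using S by (intro borel_measurable_times[OF _ Linf_measurable[OF f]] borel_measurable_indicator) auto
    also have "(\<lambda>x. indicator S x * (indicator {0..} x * f x)) = (\<lambda>x. indicator S x *\<^sub>R f x)"
      using S(2) by (auto simp: indicator_def fun_eq_iff)
    finally show ?thesis unfolding set_borel_measurable_def .
  qed
  moreover have "AE x in lebesgue. x \<in> S \<longrightarrow> norm (f x) \<le> norm C"
    using C by eventually_elim (use S(2) in auto)
  ultimately show ?thesis by (rule set_integrable_bound)
qed

lemma set_integrable_Linf_Icc: "f \<in> Linf \<Longrightarrow> 0 \<le> a \<Longrightarrow> set_integrable lebesgue {a..b} f"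
  by (rule set_integrable_Linf) (auto, cases "a \<le> b", auto)

definition primitive :: "(real \<Rightarrow> real) \<Rightarrow> real \<Rightarrow> real" where
  "primitive f y = (LINT t:{0..y}|lebesgue. f t)"

lemma Linf_Icc_integral:
  assumes "f \<in> Linf" "0 \<le> a"
  shows "f integrable_on {a..b}" "(LINT t:{a..b}|lebesgue. f t) = integral {a..b} f"
  using set_lebesgue_integral_eq_integral[OF set_integrable_Linf_Icc[OF assms]] by auto

lemma set_integral_Icc_primitive:
  assumes "f \<in> Linf" "0 \<le> a" "a \<le> b"
  shows "(LINT t:{a..b}|lebesgue. f t) = primitive f b - primitive f a"
proof -
  have "integral {0..a} f + integral {a..b} f = integral {0..b} f"
    by (rule Henstock_Kurzweil_Integration.integral_combine[OF assms(2,3) Linf_Icc_integral(1)])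
      (use assms in auto)
  then show ?thesis unfolding primitive_def using Linf_Icc_integral(2)[OF assms(1)] assms by simp
qed

lemma primitive_lipschitzE:
  assumes f: "f \<in> Linf"
  obtains C where "C \<ge> 0" "\<And>a b. 0 \<le> a \<Longrightarrow> a \<le> b \<Longrightarrow> \<bar>primitive f b - primitive f a\<bar> \<le> C * (b - a)"
proof -
  obtain C where C: "C \<ge> 0" "AE x in lebesgue. 0 \<le> x \<longrightarrow> \<bar>f x\<bar> \<le> C" using LinfE[OF f] by metis
  have "\<bar>primitive f b - primitive f a\<bar> \<le> C * (b - a)" if ab: "0 \<le> a" "a \<le> b" for a b
  proof -
    have "\<bar>LINT t:{a..b}|lebesgue. f t\<bar> \<le> (LINT t:{a..b}|lebesgue. \<bar>f t\<bar>)"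
      using set_integral_norm_bound[OF set_integrable_Linf_Icc[OF f ab(1)]] by simp
    also have "\<dots> \<le> (LINT t:{a..b}|lebesgue. C)"
    proof (rule set_integral_mono_AE)
      show "set_integrable lebesgue {a..b} (\<lambda>t. \<bar>f t\<bar>)"
        using set_integrable_abs[OF set_integrable_Linf_Icc[OF f ab(1)]] .
      show "set_integrable lebesgue {a..b} (\<lambda>t. C)"
        using set_integrable_Linf_Icc[OF Linf_const ab(1)] .
      show "AE x\<in>{a..b} in lebesgue. \<bar>f x\<bar> \<le> C"
        using C(2) by eventually_elim (use ab in auto)
    qed
    also have "\<dots> = C * (b - a)" using ab by (subst set_integral_const) auto
    finally show ?thesis using set_integral_Icc_primitive[OF f ab] by simp
  qed
  with C(1) show thesis by (rule that)
qed

lemma set_integral_shift_primitive: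
  assumes f: "f \<in> Linf" and s: "0 \<le> s" and x: "0 \<le> x"
  shows "(LINT y:{0..x}|lebesgue. f (y + s)) = primitive f (s + x) - primitive f s"
proof -
  have "(LINT y:{0..x}|lebesgue. f (y + s)) = integral {0..x} (\<lambda>y. f (y + s))"
    using Linf_Icc_integral(2)[OF Linf_shift[OF f s], of 0 x] by simp
  also have "\<dots> = integral {0..x} (f \<circ> (+) s)" by (simp add: o_def add.commute)
  also have "\<dots> = integral {s..x+s} f" using integral_shift_Icc_real[of 0 x f s] by simp
  also have "\<dots> = (LINT t:{s..s+x}|lebesgue. f t)" using Linf_Icc_integral(2)[OF f s, of "s+x"] by (simp add: add.commute)
  also have "\<dots> = primitive f (s + x) - primitive f s" using set_integral_Icc_primitive[OF f s] x by simp
  finally show ?thesis .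
qed

lemma primitive_add:
  "f \<in> Linf \<Longrightarrow> g \<in> Linf \<Longrightarrow> 0 \<le> y \<Longrightarrow> primitive (\<lambda>x. f x + g x) y = primitive f y + primitive g y"
  unfolding primitive_def by (rule set_integral_add) (auto intro: set_integrable_Linf_Icc)

lemma primitive_cmult: "primitive (\<lambda>x. c * f x) y = c * primitive f y"
  unfolding primitive_def by simp

lemma primitive_const: "0 \<le> y \<Longrightarrow> primitive (\<lambda>x. c) y = c * y"
  unfolding primitive_def by (subst set_integral_const) auto

lemma primitive_mono:
  assumes "f \<in> Linf" "AE x in lebesgue. x \<ge> 0 \<longrightarrow> f x \<ge> 0" "0 \<le> a" "a \<le> b"
  shows "primitive f a \<le> primitive f b"
proof -
  have "0 \<le> (LINT t:{a..b}|lebesgue. f t)"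
  proof -
    have "(LINT t:{a..b}|lebesgue. (0::real)) \<le> (LINT t:{a..b}|lebesgue. f t)"
      by (rule set_integral_mono_AE) (use assms in \<open>auto intro: set_integrable_Linf_Icc Linf_const elim!: eventually_mono\<close>)
    then show ?thesis by simp
  qed
  then show ?thesis using set_integral_Icc_primitive[OF assms(1,3,4)] by simp
qed


section \<open>The upper mean\<close>

lemma increment_le_of_window_increments:
  fixes G :: "real \<Rightarrow> real"
  assumes th: "\<theta> > 0" and win: "\<And>a. a0 \<le> a \<Longrightarrow> G (a + \<theta>) - G a \<le> \<theta> * B"
    and lip: "\<And>a b. a0 \<le> a \<Longrightarrow> a \<le> b \<Longrightarrow> \<bar>G b - G a\<bar> \<le> C * (b - a)"
    and y: "0 \<le> y"
  shows "G (a0 + y) - G a0 \<le> y * B + \<theta> * (C + \<bar>B\<bar>)"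
proof -
  have step: "G (a0 + real k * \<theta>) - G a0 \<le> real k * \<theta> * B" for k :: nat
  proof (induction k)
    case 0 then show ?case by simp
  next
    case (Suc k)
    have "G (a0 + real k * \<theta> + \<theta>) - G (a0 + real k * \<theta>) \<le> \<theta> * B"
      using win[of "a0 + real k * \<theta>"] th by simp
    then show ?case using Suc.IH by (simp add: algebra_simps)
  qed
  define m where "m = nat \<lfloor>y / \<theta>\<rfloor>"
  define r where "r = y - real m * \<theta>"
  have fl: "real m = of_int \<lfloor>y / \<theta>\<rfloor>" unfolding m_def using y th by simp
  have "real m \<le> y / \<theta>" using fl by linarith
  then have r0: "0 \<le> r" unfolding r_def using th by (simp add: field_simps)
  have "y / \<theta> < real m + 1" using fl by linarith
  then have r1: "r < \<theta>" unfolding r_def using th by (simp add: field_simps)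
  have "\<bar>G (a0 + 1) - G a0\<bar> \<le> C" using lip[of a0 "a0 + 1"] by simp
  then have Cnn: "C \<ge> 0" by (meson abs_ge_zero order_trans)
  have "G (a0 + y) - G (a0 + real m * \<theta>) \<le> C * r"
    using lip[of "a0 + real m * \<theta>" "a0 + y"] r0 th unfolding r_def by (simp add: algebra_simps)
  also have "\<dots> \<le> C * \<theta>" using r1 Cnn by (simp add: mult_left_mono)
  finally have A: "G (a0 + y) - G (a0 + real m * \<theta>) \<le> C * \<theta>" .
  have B: "real m * \<theta> * B \<le> y * B + \<theta> * \<bar>B\<bar>"
  proof -
    have "real m * \<theta> * B = y * B - r * B" unfolding r_def by (simp add: algebra_simps)
    moreover have "- (r * B) \<le> \<theta> * \<bar>B\<bar>"
    proof -
      have "r * (- B) \<le> r * \<bar>B\<bar>" using r0 by (intro mult_left_mono) auto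
      then have "- (r * B) \<le> r * \<bar>B\<bar>" by simp
      also have "\<dots> \<le> \<theta> * \<bar>B\<bar>" using r1 by (simp add: mult_right_mono)
      finally show ?thesis .
    qed
    ultimately show ?thesis by simp
  qed
  show ?thesis using A B step[of m] by (simp add: algebra_simps)
qed

definition window_avg :: "(real \<Rightarrow> real) \<Rightarrow> real \<Rightarrow> real \<Rightarrow> real" where
  "window_avg f \<theta> x = (1 / \<theta>) * (LINT t:{x..x+\<theta>}|lebesgue. f t)"

lemma window_avg_primitive:
  "f \<in> Linf \<Longrightarrow> 0 \<le> x \<Longrightarrow> \<theta> > 0 \<Longrightarrow> window_avg f \<theta> x = (primitive f (x + \<theta>) - primitive f x) / \<theta>"
  unfolding window_avg_def using set_integral_Icc_primitive[of f x "x + \<theta>"] by simp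

definition window_limsup :: "(real \<Rightarrow> real) \<Rightarrow> real \<Rightarrow> real" where
  "window_limsup f \<theta> = real_of_ereal (Limsup at_top (\<lambda>x. ereal (window_avg f \<theta> x)))"

context
  fixes f :: "real \<Rightarrow> real" and C :: real
  assumes f: "f \<in> Linf" and C: "\<And>a b. 0 \<le> a \<Longrightarrow> a \<le> b \<Longrightarrow> \<bar>primitive f b - primitive f a\<bar> \<le> C * (b - a)"
begin

lemma Limsup_window_avg:
  assumes th: "\<theta> > 0"
  shows "Limsup at_top (\<lambda>x. ereal (window_avg f \<theta> x)) = ereal (window_limsup f \<theta>)"
    and "\<bar>window_limsup f \<theta>\<bar> \<le> C"
proof -
  have bnd: "window_avg f \<theta> x \<le> C \<and> - C \<le> window_avg f \<theta> x" if "x \<ge> 0" for x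
  proof -
    have "\<bar>primitive f (x + \<theta>) - primitive f x\<bar> \<le> C * \<theta>" using C[of x "x + \<theta>"] that th by simp
    then have "\<bar>window_avg f \<theta> x\<bar> \<le> C"
      using window_avg_primitive[OF f that th] th by (simp add: abs_divide pos_divide_le_eq)
    then show ?thesis by (simp add: abs_le_iff)
  qed
  define L where "L = Limsup at_top (\<lambda>x. ereal (window_avg f \<theta> x))"
  have ev: "eventually (\<lambda>x::real. x \<ge> 0) at_top" by (rule eventually_ge_at_top)
  have up: "L \<le> ereal C" unfolding L_def
    by (rule Limsup_bounded, rule eventually_mono[OF ev]) (simp add: bnd)
  have lo: "ereal (- C) \<le> L" unfolding L_def
    by (rule le_Limsup, simp, rule eventually_mono[OF ev]) (simp add: bnd)
  obtain r where "L = ereal r" using up lo by (cases L) auto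
  with up lo show "Limsup at_top (\<lambda>x. ereal (window_avg f \<theta> x)) = ereal (window_limsup f \<theta>)"
    and "\<bar>window_limsup f \<theta>\<bar> \<le> C"
    unfolding window_limsup_def L_def[symmetric] by auto
qed

lemma eventually_window_avg_less:
  assumes "\<theta> > 0" "\<epsilon> > 0"
  shows "eventually (\<lambda>x. window_avg f \<theta> x < window_limsup f \<theta> + \<epsilon>) at_top"
proof -
  have "Limsup at_top (\<lambda>x. ereal (window_avg f \<theta> x)) < ereal (window_limsup f \<theta> + \<epsilon>)"
    using Limsup_window_avg(1) assms by simp
  then show ?thesis by (auto dest: Limsup_lessD elim!: eventually_mono)
qed

lemma frequently_window_avg_greater:
  assumes "\<theta> > 0" "\<epsilon> > 0"
  shows "\<exists>x\<ge>T. window_avg f \<theta> x > window_limsup f \<theta> - \<epsilon>"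
proof (rule ccontr)
  assume "\<not> ?thesis"
  then have "eventually (\<lambda>x. ereal (window_avg f \<theta> x) \<le> ereal (window_limsup f \<theta> - \<epsilon>)) at_top"
    unfolding eventually_at_top_linorder by (auto simp: not_less)
  then have "Limsup at_top (\<lambda>x. ereal (window_avg f \<theta> x)) \<le> ereal (window_limsup f \<theta> - \<epsilon>)"
    by (rule Limsup_bounded)
  then show False using Limsup_window_avg(1) assms by simp
qed

lemma window_limsup_le:
  assumes th: "\<theta> > 0" "\<theta> \<le> \<theta>'"
  shows "window_limsup f \<theta>' \<le> window_limsup f \<theta> + \<theta> / \<theta>' * (2 * C + 1)"
proof -
  define k where "k = \<theta> / \<theta>' * (2 * C + 1)"
  have th': "\<theta>' > 0" using th by simp
  show ?thesis unfolding k_def[symmetric]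
  proof (rule ccontr)
    assume "\<not> window_limsup f \<theta>' \<le> window_limsup f \<theta> + k"
    define gap where "gap = window_limsup f \<theta>' - (window_limsup f \<theta> + k)"
    have gap: "gap > 0" using \<open>\<not> _\<close> unfolding gap_def by simp
    define \<delta> where "\<delta> = min 1 (gap / 2)"
    have d: "\<delta> > 0" "\<delta> \<le> 1" "\<delta> \<le> gap / 2" using gap unfolding \<delta>_def by auto
    obtain X where X: "\<And>x. x \<ge> X \<Longrightarrow> window_avg f \<theta> x < window_limsup f \<theta> + \<delta>"
      using eventually_window_avg_less[OF th(1) d(1)] unfolding eventually_at_top_linorder by blast
    define B where "B = window_limsup f \<theta> + \<delta>"
    have absB: "\<bar>B\<bar> \<le> C + 1" using Limsup_window_avg(2)[OF th(1)] d unfolding B_def by auto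
    \<comment> \<open>Far out, all \<open>\<theta>\<close>-windows have averages below \<open>B\<close>; a \<open>\<theta>'\<close>-window is covered by them up to
      an error \<open>k\<close>.\<close>
    have "window_avg f \<theta>' x \<le> B + k" if x: "x \<ge> max X 0" for x
    proof -
      have "primitive f (x + \<theta>') - primitive f x \<le> \<theta>' * B + \<theta> * (C + \<bar>B\<bar>)"
      proof (rule increment_le_of_window_increments[OF th(1)])
        fix a assume a: "x \<le> a"
        then have "(primitive f (a + \<theta>) - primitive f a) / \<theta> < B"
          using X[of a] x window_avg_primitive[OF f _ th(1), of a] unfolding B_def by simp
        then show "primitive f (a + \<theta>) - primitive f a \<le> \<theta> * B"
          using th(1) by (simp add: pos_divide_less_eq mult.commute)
      next
        fix a b assume "x \<le> a" "a \<le> b"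
        then show "\<bar>primitive f b - primitive f a\<bar> \<le> C * (b - a)" using C x by simp
      qed (use th in simp)
      also have "\<dots> \<le> \<theta>' * B + \<theta> * (2 * C + 1)" using absB th by (simp add: mult_left_mono)
      finally have "(primitive f (x + \<theta>') - primitive f x) / \<theta>' \<le> (\<theta>' * B + \<theta> * (2 * C + 1)) / \<theta>'"
        using th' by (simp add: divide_right_mono)
      also have "\<dots> = B + k" unfolding k_def using th' by (simp add: field_simps)
      finally show ?thesis using window_avg_primitive[OF f _ th', of x] x by simp
    qed
    moreover obtain x where "x \<ge> max X 0" "window_avg f \<theta>' x > window_limsup f \<theta>' - gap / 2"
      using frequently_window_avg_greater[OF th', of "gap / 2" "max X 0"] gap by auto
    ultimately have "window_avg f \<theta>' x \<le> window_limsup f \<theta> + \<delta> + k"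
      "window_limsup f \<theta>' - gap / 2 < window_avg f \<theta>' x"
      unfolding B_def by auto
    then show False using d(3) gap_def by linarith
  qed
qed
end

definition upper_mean_real :: "(real \<Rightarrow> real) \<Rightarrow> real" where
  "upper_mean_real f = Inf (window_limsup f ` {0<..})"

context
  fixes f :: "real \<Rightarrow> real"
  assumes f: "f \<in> Linf"
begin

lemma upper_mean_real_le_window_limsup:
  assumes "\<theta> > 0" shows "upper_mean_real f \<le> window_limsup f \<theta>"
proof -
  obtain C where C: "\<And>a b. 0 \<le> a \<Longrightarrow> a \<le> b \<Longrightarrow> \<bar>primitive f b - primitive f a\<bar> \<le> C * (b - a)"
    using primitive_lipschitzE[OF f] by metis
  have "bdd_below (window_limsup f ` {0<..})"
    using Limsup_window_avg(2)[OF f C] by (intro bdd_belowI[of _ "-C"]) force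
  then show ?thesis unfolding upper_mean_real_def using assms by (intro cInf_lower) auto
qed

lemma window_limsup_near_upper_mean_real:
  assumes "\<epsilon> > 0" obtains \<theta> where "\<theta> > 0" "window_limsup f \<theta> < upper_mean_real f + \<epsilon>"
proof -
  have "\<exists>x\<in>window_limsup f ` {0<..}. x < upper_mean_real f + \<epsilon>"
    unfolding upper_mean_real_def by (rule cInf_lessD) (use assms in auto)
  then show thesis using that by auto
qed

lemma tendsto_window_limsup: "(window_limsup f \<longlongrightarrow> upper_mean_real f) at_top"
  unfolding tendsto_iff eventually_at_top_linorder
proof (intro allI impI)
  fix \<epsilon> :: real assume e: "\<epsilon> > 0"
  obtain C where C: "\<And>a b. 0 \<le> a \<Longrightarrow> a \<le> b \<Longrightarrow> \<bar>primitive f b - primitive f a\<bar> \<le> C * (b - a)"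
    using primitive_lipschitzE[OF f] by metis
  obtain \<theta>0 where t0: "\<theta>0 > 0" "window_limsup f \<theta>0 < upper_mean_real f + \<epsilon> / 2"
    using window_limsup_near_upper_mean_real[of "\<epsilon> / 2"] e by auto
  show "\<exists>N. \<forall>\<theta>\<ge>N. dist (window_limsup f \<theta>) (upper_mean_real f) < \<epsilon>"
  proof (intro exI allI impI)
    fix \<theta> assume th: "\<theta> \<ge> max \<theta>0 (2 * \<theta>0 * (2 * C + 1) / \<epsilon> + 1)"
    then have th0: "\<theta> \<ge> \<theta>0" "\<theta> > 2 * \<theta>0 * (2 * C + 1) / \<epsilon>" by auto
    have tpos: "\<theta> > 0" using th0 t0 by simp
    have "2 * \<theta>0 * (2 * C + 1) < \<theta> * \<epsilon>" using th0(2) e by (simp add: pos_divide_less_eq)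
    then have "\<theta>0 / \<theta> * (2 * C + 1) < \<epsilon> / 2" using tpos by (simp add: field_simps)
    moreover have "window_limsup f \<theta> \<le> window_limsup f \<theta>0 + \<theta>0 / \<theta> * (2 * C + 1)"
      by (rule window_limsup_le[OF f C t0(1) th0(1)])
    moreover have "upper_mean_real f \<le> window_limsup f \<theta>"
      using upper_mean_real_le_window_limsup tpos by simp
    ultimately show "dist (window_limsup f \<theta>) (upper_mean_real f) < \<epsilon>"
      using t0(2) unfolding dist_real_def abs_less_iff by linarith
  qed
qed

lemma upper_mean_eq: "upper_mean f = ereal (upper_mean_real f)"
proof -
  obtain C where C: "\<And>a b. 0 \<le> a \<Longrightarrow> a \<le> b \<Longrightarrow> \<bar>primitive f b - primitive f a\<bar> \<le> C * (b - a)"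
    using primitive_lipschitzE[OF f] by metis
  have "((\<lambda>\<theta>. Limsup at_top (\<lambda>x. ereal ((1 / \<theta>) * (LINT t:{x..x+\<theta>}|lebesgue. f t))))
      \<longlongrightarrow> ereal (upper_mean_real f)) at_top"
  proof (rule Lim_transform_eventually[OF tendsto_ereal[OF tendsto_window_limsup]])
    show "\<forall>\<^sub>F \<theta> in at_top. ereal (window_limsup f \<theta>) =
        Limsup at_top (\<lambda>x. ereal (1 / \<theta> * (LINT t:{x..x + \<theta>}|lebesgue. f t)))"
      using eventually_gt_at_top[of 0]
      by eventually_elim (use Limsup_window_avg(1)[OF f C] in \<open>simp add: window_avg_def\<close>)
  qed
  then show ?thesis unfolding upper_mean_def by (intro tendsto_Lim) auto
qed

lemma frequently_increment_ge_upper_mean: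
  assumes th: "\<theta> > 0" and e: "\<epsilon> > 0"
  obtains x where "x \<ge> T" "x \<ge> 0"
    "primitive f (x + \<theta>) - primitive f x \<ge> \<theta> * (upper_mean_real f - \<epsilon>)"
proof -
  obtain C where C: "\<And>a b. 0 \<le> a \<Longrightarrow> a \<le> b \<Longrightarrow> \<bar>primitive f b - primitive f a\<bar> \<le> C * (b - a)"
    using primitive_lipschitzE[OF f] by metis
  obtain x where x: "x \<ge> max T 0" "window_avg f \<theta> x > window_limsup f \<theta> - \<epsilon>"
    using frequently_window_avg_greater[OF f C th e] by blast
  then have "(primitive f (x + \<theta>) - primitive f x) / \<theta> > upper_mean_real f - \<epsilon>"
    using window_avg_primitive[OF f _ th, of x] upper_mean_real_le_window_limsup[OF th] by simp
  then have "primitive f (x + \<theta>) - primitive f x \<ge> \<theta> * (upper_mean_real f - \<epsilon>)"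
    using th by (simp add: pos_less_divide_eq mult.commute)
  with x(1) show thesis using that by auto
qed

lemma eventually_increment_le_upper_mean:
  assumes e: "\<epsilon> > 0"
  obtains \<theta> X where "\<theta> > 0" "X \<ge> 0"
    "\<And>x. x \<ge> X \<Longrightarrow> primitive f (x + \<theta>) - primitive f x \<le> \<theta> * (upper_mean_real f + \<epsilon>)"
proof -
  obtain C where C: "\<And>a b. 0 \<le> a \<Longrightarrow> a \<le> b \<Longrightarrow> \<bar>primitive f b - primitive f a\<bar> \<le> C * (b - a)"
    using primitive_lipschitzE[OF f] by metis
  obtain \<theta> where th: "\<theta> > 0" "window_limsup f \<theta> < upper_mean_real f + \<epsilon> / 2"
    using window_limsup_near_upper_mean_real[of "\<epsilon> / 2"] e by auto
  obtain X where X: "\<And>x. x \<ge> X \<Longrightarrow> window_avg f \<theta> x < window_limsup f \<theta> + \<epsilon> / 2"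
    using eventually_window_avg_less[OF f C th(1), of "\<epsilon> / 2"] e
    unfolding eventually_at_top_linorder by auto
  have "primitive f (x + \<theta>) - primitive f x \<le> \<theta> * (upper_mean_real f + \<epsilon>)" if x: "x \<ge> max X 0" for x
  proof -
    have "(primitive f (x + \<theta>) - primitive f x) / \<theta> < upper_mean_real f + \<epsilon>"
      using X[of x] x th window_avg_primitive[OF f _ th(1), of x] by simp
    then show ?thesis using th by (simp add: pos_divide_less_eq mult.commute)
  qed
  then show thesis using that[of \<theta> "max X 0"] th(1) by simp
qed

end

section \<open>Weak* limits along ultrafilters\<close>

lemma integrable_bounded_mult:
  fixes \<phi> b :: "'a \<Rightarrow> real"
  assumes "integrable M \<phi>" "b \<in> borel_measurable M" "AE y in M. \<bar>b y\<bar> \<le> K"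
  shows "integrable M (\<lambda>y. b y * \<phi> y)"
proof (rule Bochner_Integration.integrable_bound)
  show "integrable M (\<lambda>y. K * \<bar>\<phi> y\<bar>)" using assms(1) by auto
  show "(\<lambda>y. b y * \<phi> y) \<in> borel_measurable M" using assms(1,2) by auto
  show "AE y in M. norm (b y * \<phi> y) \<le> norm (K * \<bar>\<phi> y\<bar>)"
    using assms(3)
  proof eventually_elim
    case (elim y)
    then have "\<bar>b y\<bar> * \<bar>\<phi> y\<bar> \<le> \<bar>K\<bar> * \<bar>\<phi> y\<bar>" by (intro mult_right_mono) auto
    then show ?case by (simp add: abs_mult)
  qed
qed

lemma integral_bounded_mult_bound:
  fixes \<phi> b :: "'a \<Rightarrow> real"
  assumes "integrable M \<phi>" "b \<in> borel_measurable M" "AE y in M. \<bar>b y\<bar> \<le> K"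
  shows "\<bar>integral\<^sup>L M (\<lambda>y. b y * \<phi> y)\<bar> \<le> K * integral\<^sup>L M (\<lambda>y. \<bar>\<phi> y\<bar>)"
proof -
  have "\<bar>integral\<^sup>L M (\<lambda>y. b y * \<phi> y)\<bar> \<le> integral\<^sup>L M (\<lambda>y. \<bar>b y * \<phi> y\<bar>)"
    by (rule integral_abs_bound)
  also have "\<dots> \<le> integral\<^sup>L M (\<lambda>y. K * \<bar>\<phi> y\<bar>)"
  proof (rule integral_mono_AE)
    show "integrable M (\<lambda>y. \<bar>b y * \<phi> y\<bar>)" using integrable_bounded_mult[OF assms] by auto
    show "integrable M (\<lambda>y. K * \<bar>\<phi> y\<bar>)" using assms(1) by auto
    show "AE y in M. \<bar>b y * \<phi> y\<bar> \<le> K * \<bar>\<phi> y\<bar>"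
      using assms(3) by eventually_elim (simp add: abs_mult mult_right_mono)
  qed
  finally show ?thesis by simp
qed

lemma tendsto_of_approximants:
  fixes a :: "nat \<Rightarrow> 'a \<Rightarrow> real"
  assumes lim: "\<And>i. (a i \<longlongrightarrow> L i) F" and e: "e \<longlonglongrightarrow> 0"
    and approx: "\<And>i s. \<bar>a i s - a' s\<bar> \<le> e i" and approx_lim: "\<And>i. \<bar>L i - L'\<bar> \<le> e i"
  shows "(a' \<longlongrightarrow> L') F"
  unfolding tendsto_iff
proof (intro allI impI)
  fix \<epsilon> :: real assume "\<epsilon> > 0"
  then have ep3: "\<epsilon> / 3 > 0" by simp
  have "eventually (\<lambda>i. dist (e i) 0 < \<epsilon> / 3) sequentially" using e ep3 tendsto_iff by blast
  then obtain i where i: "\<bar>e i\<bar> < \<epsilon> / 3" unfolding eventually_sequentially by auto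
  have "eventually (\<lambda>s. dist (a i s) (L i) < \<epsilon> / 3) F"
    using lim[of i] ep3 tendsto_iff by blast
  then show "eventually (\<lambda>s. dist (a' s) L' < \<epsilon>) F"
  proof eventually_elim
    case (elim s)
    have "\<bar>a' s - L'\<bar> \<le> \<bar>a i s - a' s\<bar> + \<bar>a i s - L i\<bar> + \<bar>L i - L'\<bar>" by linarith
    also have "\<dots> < \<epsilon>" using approx[of i s] approx_lim[of i] i elim by (simp add: dist_real_def)
    finally show ?case by (simp add: dist_real_def)
  qed
qed

lemma integral_abs_diff_tendsto_zero:
  fixes \<phi> :: "'a \<Rightarrow> real"
  assumes "\<And>i. integrable M (\<phi>s i)" "\<And>y. y \<in> space M \<Longrightarrow> (\<lambda>i. \<phi>s i y) \<longlonglongrightarrow> \<phi> y"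
    and "\<And>i y. y \<in> space M \<Longrightarrow> norm (\<phi>s i y) \<le> 2 * norm (\<phi> y)" and "integrable M \<phi>"
  shows "(\<lambda>i. integral\<^sup>L M (\<lambda>y. \<bar>\<phi>s i y - \<phi> y\<bar>)) \<longlonglongrightarrow> 0"
proof -
  have "(\<lambda>i. integral\<^sup>L M (\<lambda>y. \<bar>\<phi>s i y - \<phi> y\<bar>)) \<longlonglongrightarrow> integral\<^sup>L M (\<lambda>y. 0)"
  proof (rule integral_dominated_convergence[where w = "\<lambda>y. 3 * \<bar>\<phi> y\<bar>"])
    show "integrable M (\<lambda>y. 3 * \<bar>\<phi> y\<bar>)" using assms(4) by auto
    show "(\<lambda>y. \<bar>\<phi>s i y - \<phi> y\<bar>) \<in> borel_measurable M" for i using assms(1,4) by auto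
    show "AE y in M. (\<lambda>i. \<bar>\<phi>s i y - \<phi> y\<bar>) \<longlonglongrightarrow> 0"
    proof (rule AE_I2)
      fix y assume "y \<in> space M"
      then have "(\<lambda>i. \<bar>\<phi>s i y - \<phi> y\<bar>) \<longlonglongrightarrow> \<bar>\<phi> y - \<phi> y\<bar>"
        using assms(2) by (intro tendsto_intros) auto
      then show "(\<lambda>i. \<bar>\<phi>s i y - \<phi> y\<bar>) \<longlonglongrightarrow> 0" by simp
    qed
    show "AE y in M. norm \<bar>\<phi>s i y - \<phi> y\<bar> \<le> 3 * \<bar>\<phi> y\<bar>" for i
      using assms(3)[of _ i] by (intro AE_I2) fastforce
  qed simp
  then show ?thesis by simp
qed

lemma tendsto_integral_mult_if_indicators:
  fixes g :: "'b \<Rightarrow> 'a \<Rightarrow> real"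
  assumes g: "\<And>s. g s \<in> borel_measurable M" "\<And>s. AE y in M. \<bar>g s y\<bar> \<le> C"
    and h: "h \<in> borel_measurable M" "AE y in M. \<bar>h y\<bar> \<le> C"
    and ind: "\<And>A. A \<in> sets M \<Longrightarrow> emeasure M A < \<infinity> \<Longrightarrow>
      ((\<lambda>s. integral\<^sup>L M (\<lambda>y. g s y * indicator A y)) \<longlongrightarrow> integral\<^sup>L M (\<lambda>y. h y * indicator A y)) F"
    and \<phi>: "integrable M \<phi>"
  shows "((\<lambda>s. integral\<^sup>L M (\<lambda>y. g s y * \<phi> y)) \<longlongrightarrow> integral\<^sup>L M (\<lambda>y. h y * \<phi> y)) F"
  using \<phi>
proof (induct rule: integrable_induct)
  case (base A c)
  have e: "(\<lambda>y. b y * (indicator A y *\<^sub>R c)) = (\<lambda>y. c * (b y * indicator A y))" for b :: "'a \<Rightarrow> real"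
    by (auto simp: fun_eq_iff)
  show ?case unfolding e by (simp only: integral_mult_right_zero) (intro tendsto_mult_left ind base)
next
  case (add \<phi>1 \<phi>2)
  have e: "(\<lambda>y. b y * (\<phi>1 y + \<phi>2 y)) = (\<lambda>y. b y * \<phi>1 y + b y * \<phi>2 y)" for b :: "'a \<Rightarrow> real"
    by (auto simp: fun_eq_iff algebra_simps)
  show ?case unfolding e
    using integrable_bounded_mult[OF add(1) g(1) g(2)] integrable_bounded_mult[OF add(3) g(1) g(2)]
      integrable_bounded_mult[OF add(1) h] integrable_bounded_mult[OF add(3) h]
    by (simp add: Bochner_Integration.integral_add tendsto_add add(2) add(4))
next
  case (lim \<phi> \<phi>s)
  define e where "e i = C * integral\<^sup>L M (\<lambda>y. \<bar>\<phi>s i y - \<phi> y\<bar>)" for i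
  have "(\<lambda>i. integral\<^sup>L M (\<lambda>y. \<bar>\<phi>s i y - \<phi> y\<bar>)) \<longlonglongrightarrow> 0"
    using lim(1,3,4,5) by (rule integral_abs_diff_tendsto_zero)
  then have e0: "e \<longlonglongrightarrow> 0" unfolding e_def using tendsto_mult_left[of _ 0 sequentially C] by simp
  have approx: "\<bar>integral\<^sup>L M (\<lambda>y. b y * \<phi>s i y) - integral\<^sup>L M (\<lambda>y. b y * \<phi> y)\<bar> \<le> e i"
    if b: "b \<in> borel_measurable M" "AE y in M. \<bar>b y\<bar> \<le> C" for b i
  proof -
    have "integral\<^sup>L M (\<lambda>y. b y * \<phi>s i y) - integral\<^sup>L M (\<lambda>y. b y * \<phi> y) =
        integral\<^sup>L M (\<lambda>y. b y * (\<phi>s i y - \<phi> y))"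
      using integrable_bounded_mult[OF lim(1) b] integrable_bounded_mult[OF lim(5) b]
      by (simp add: right_diff_distrib)
    also have "\<bar>\<dots>\<bar> \<le> e i"
      unfolding e_def using lim(1,5) by (intro integral_bounded_mult_bound[OF _ b]) auto
    finally show ?thesis .
  qed
  show ?case by (rule tendsto_of_approximants[OF lim(2) e0 approx[OF g] approx[OF h]])
qed

context finite_measure
begin

lemma countably_additive_if_dominated:
  fixes \<nu> :: "'a set \<Rightarrow> real"
  assumes add: "\<And>A C. A \<in> sets M \<Longrightarrow> C \<in> sets M \<Longrightarrow> A \<inter> C = {} \<Longrightarrow> \<nu> (A \<union> C) = \<nu> A + \<nu> C"
    and dom: "\<And>A. A \<in> sets M \<Longrightarrow> 0 \<le> \<nu> A \<and> \<nu> A \<le> B * measure M A"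
  shows "countably_additive (sets M) (\<lambda>A. ennreal (\<nu> A))"
proof (rule sets.empty_continuous_imp_countably_additive)
  show "positive (sets M) (\<lambda>A. ennreal (\<nu> A))" using dom[of "{}"] by (simp add: positive_def)
next
  show "additive (sets M) (\<lambda>A. ennreal (\<nu> A))"
    unfolding additive_def
  proof (intro ballI impI)
    fix A C assume AC: "A \<in> sets M" "C \<in> sets M" "A \<inter> C = {}"
    then have "\<nu> (A \<union> C) = \<nu> A + \<nu> C" by (rule add)
    then show "ennreal (\<nu> (A \<union> C)) = ennreal (\<nu> A) + ennreal (\<nu> C)"
      using dom[OF AC(1)] dom[OF AC(2)] by (simp add: ennreal_plus)
  qed
  show "\<forall>A\<in>sets M. ennreal (\<nu> A) \<noteq> \<infinity>" by simp
next
  fix A :: "nat \<Rightarrow> 'a set" assume A: "range A \<subseteq> sets M" "decseq A" "(\<Inter>i. A i) = {}"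
  have "(\<lambda>i. measure M (A i)) \<longlonglongrightarrow> measure M (\<Inter>i. A i)"
    by (rule finite_Lim_measure_decseq[OF A(1,2)])
  then have "(\<lambda>i. B * measure M (A i)) \<longlonglongrightarrow> B * measure M (\<Inter>i. A i)" by (rule tendsto_mult_left)
  then have bound: "(\<lambda>i. B * measure M (A i)) \<longlonglongrightarrow> 0" using A(3) by simp
  have "\<forall>i. 0 \<le> \<nu> (A i)" "\<forall>i. \<nu> (A i) \<le> B * measure M (A i)"
    using dom A(1) by (simp_all add: range_subsetD)
  then have "(\<lambda>i. \<nu> (A i)) \<longlonglongrightarrow> 0"
    by (rule real_tendsto_sandwich[OF always_eventually always_eventually tendsto_const bound])
  then have "(\<lambda>i. ennreal (\<nu> (A i))) \<longlonglongrightarrow> ennreal 0" by (rule tendsto_ennrealI)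
  then show "(\<lambda>i. ennreal (\<nu> (A i))) \<longlonglongrightarrow> 0" by simp
qed

lemma nn_density_if_dominated:
  fixes \<nu> :: "'a set \<Rightarrow> real"
  assumes add: "\<And>A C. A \<in> sets M \<Longrightarrow> C \<in> sets M \<Longrightarrow> A \<inter> C = {} \<Longrightarrow> \<nu> (A \<union> C) = \<nu> A + \<nu> C"
    and dom: "\<And>A. A \<in> sets M \<Longrightarrow> 0 \<le> \<nu> A \<and> \<nu> A \<le> B * measure M A"
  obtains D where "D \<in> borel_measurable M"
    "\<And>A. A \<in> sets M \<Longrightarrow> (\<integral>\<^sup>+y. D y * indicator A y \<partial>M) = ennreal (\<nu> A)"
proof -
  define N where "N = measure_of (space M) (sets M) (\<lambda>A. ennreal (\<nu> A))"
  have pos: "positive (sets M) (\<lambda>A. ennreal (\<nu> A))" unfolding positive_def using dom[of "{}"] by simp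
  have N_eq: "emeasure N A = ennreal (\<nu> A)" if "A \<in> sets M" for A
    unfolding N_def
    by (rule emeasure_measure_of_sigma[OF sets.sigma_algebra_axioms pos
          countably_additive_if_dominated[OF add dom] that])
  have N_sets: "sets N = sets M" unfolding N_def by (rule sets.sets_measure_of_eq)
  have "absolutely_continuous M N"
    unfolding absolutely_continuous_def
  proof
    fix A assume "A \<in> null_sets M"
    then have A: "A \<in> sets M" "measure M A = 0" by (auto simp: null_sets_def measure_def)
    then show "A \<in> null_sets N" using N_eq[OF A(1)] N_sets dom[OF A(1)] by (simp add: null_sets_def)
  qed
  then obtain D where D: "D \<in> borel_measurable M" "density M D = N"
    using Radon_Nikodym N_sets by auto
  have "(\<integral>\<^sup>+y. D y * indicator A y \<partial>M) = ennreal (\<nu> A)" if "A \<in> sets M" for A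
    using emeasure_density[OF D(1), of A] D(2) N_eq[OF that] that by simp
  with D(1) show thesis by (rule that)
qed

lemma density_if_dominated:
  fixes \<nu> :: "'a set \<Rightarrow> real"
  assumes add: "\<And>A C. A \<in> sets M \<Longrightarrow> C \<in> sets M \<Longrightarrow> A \<inter> C = {} \<Longrightarrow> \<nu> (A \<union> C) = \<nu> A + \<nu> C"
    and dom: "\<And>A. A \<in> sets M \<Longrightarrow> 0 \<le> \<nu> A \<and> \<nu> A \<le> B * measure M A"
  obtains d where "d \<in> borel_measurable M" "\<And>y. 0 \<le> d y" "integrable M d"
    "\<And>A. A \<in> sets M \<Longrightarrow> integral\<^sup>L M (\<lambda>y. indicator A y * d y) = \<nu> A"
proof -
  obtain D where D: "D \<in> borel_measurable M"
    "\<And>A. A \<in> sets M \<Longrightarrow> (\<integral>\<^sup>+y. D y * indicator A y \<partial>M) = ennreal (\<nu> A)"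
    by (rule nn_density_if_dominated[OF add dom]) auto
  have "(\<integral>\<^sup>+y. D y \<partial>M) = (\<integral>\<^sup>+y. D y * indicator (space M) y \<partial>M)"
    by (rule nn_integral_cong) simp
  then have "(\<integral>\<^sup>+y. D y \<partial>M) \<noteq> \<infinity>" using D(2)[of "space M"] by simp
  then have "AE y in M. D y \<noteq> \<infinity>" by (rule nn_integral_PInf_AE[OF D(1)])
  then have Dd: "AE y in M. D y = ennreal (enn2real (D y))" by eventually_elim (simp add: less_top)
  define d where "d y = enn2real (D y)" for y
  have dm: "d \<in> borel_measurable M" unfolding d_def using D(1) by measurable
  have dnn: "0 \<le> d y" for y unfolding d_def by simp
  have dA: "integrable M (\<lambda>y. indicator A y * d y) \<and> integral\<^sup>L M (\<lambda>y. indicator A y * d y) = \<nu> A"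
    if A: "A \<in> sets M" for A
  proof -
    have "(\<integral>\<^sup>+y. ennreal (indicator A y * d y) \<partial>M) = (\<integral>\<^sup>+y. D y * indicator A y \<partial>M)"
      by (rule nn_integral_cong_AE) (use Dd in \<open>eventually_elim, simp add: indicator_def d_def\<close>)
    then have eq: "(\<integral>\<^sup>+y. ennreal (indicator A y * d y) \<partial>M) = ennreal (\<nu> A)" using D(2)[OF A] by simp
    have meas: "(\<lambda>y. indicator A y * d y) \<in> borel_measurable M"
      using A dm by (intro borel_measurable_times borel_measurable_indicator) auto
    have i: "integrable M (\<lambda>y. indicator A y * d y)"
      by (rule integrableI_nonneg[OF meas]) (use eq dnn in auto)
    have "ennreal (integral\<^sup>L M (\<lambda>y. indicator A y * d y)) = ennreal (\<nu> A)"
      using nn_integral_eq_integral[OF i] eq dnn by simp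
    moreover have "0 \<le> integral\<^sup>L M (\<lambda>y. indicator A y * d y)"
      by (rule Bochner_Integration.integral_nonneg) (use dnn in simp)
    ultimately show ?thesis using i dom[OF A] by simp
  qed
  have "integrable M d \<longleftrightarrow> integrable M (\<lambda>y. indicator (space M) y * d y)"
    by (rule Bochner_Integration.integrable_cong) auto
  then have "integrable M d" using dA[of "space M"] by simp
  with dm dnn dA show thesis by (intro that) auto
qed

end

context finite_measure
begin

lemma integrable_indicator_mult_const:
  "A \<in> sets M \<Longrightarrow> integrable M (\<lambda>y. indicator A y * (c::real))"
  by (intro integrable_mult_left integrable_real_indicator) (auto simp: less_top[symmetric])

lemma integrable_indicator_mult_bounded:
  fixes b :: "'a \<Rightarrow> real"
  assumes "A \<in> sets M" "b \<in> borel_measurable M" "AE y in M. \<bar>b y\<bar> \<le> K"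
  shows "integrable M (\<lambda>y. indicator A y * b y)"
proof (rule integrable_const_bound[where B = "\<bar>K\<bar>"])
  show "AE y in M. norm (indicator A y * b y) \<le> \<bar>K\<bar>"
    using assms(3) by eventually_elim (auto simp: indicator_def)
  show "(\<lambda>y. indicator A y * b y) \<in> borel_measurable M"
    using assms(1,2) by (intro borel_measurable_times borel_measurable_indicator) auto
qed

lemma AE_le_if_set_integrals_le:
  assumes d: "d \<in> borel_measurable M" "integrable M d"
    and le: "\<And>A. A \<in> sets M \<Longrightarrow> integral\<^sup>L M (\<lambda>y. indicator A y * d y) \<le> B * measure M A"
  shows "AE y in M. d y \<le> B"
proof -
  define A where "A = {y \<in> space M. B < d y}"
  have A: "A \<in> sets M" unfolding A_def using d(1) by measurable
  define g where "g y = indicator A y * d y - indicator A y * B" for y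
  have i1: "integrable M (\<lambda>y. indicator A y * d y)" using integrable_mult_indicator[OF A d(2)] by simp
  have i2: "integrable M (\<lambda>y. indicator A y * B)" using A by (rule integrable_indicator_mult_const)
  have g_nonneg: "0 \<le> g y" for y unfolding g_def A_def by (simp add: indicator_def)
  have "integral\<^sup>L M g = integral\<^sup>L M (\<lambda>y. indicator A y * d y) - B * measure M A"
    unfolding g_def using i1 i2 A by simp
  also have "\<dots> \<le> 0" using le[OF A] by simp
  moreover have "0 \<le> integral\<^sup>L M g" by (rule Bochner_Integration.integral_nonneg) (simp add: g_nonneg)
  ultimately have "integral\<^sup>L M g = 0" by simp
  then have "AE y in M. g y = 0"
    using integral_nonneg_eq_0_iff_AE[of M g] i1 i2 g_nonneg unfolding g_def by simp
  then show ?thesis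
    by (rule AE_mp) (intro AE_I2, auto simp: g_def A_def indicator_def split: if_splits)
qed

lemma ultrafilter_limit_dominated_additive:
  fixes \<mu> :: "'b \<Rightarrow> 'a set \<Rightarrow> real"
  assumes F: "ultrafilter F"
    and dom: "\<And>s A. A \<in> sets M \<Longrightarrow> 0 \<le> \<mu> s A \<and> \<mu> s A \<le> B * measure M A"
    and add: "\<And>s A C. A \<in> sets M \<Longrightarrow> C \<in> sets M \<Longrightarrow> A \<inter> C = {} \<Longrightarrow> \<mu> s (A \<union> C) = \<mu> s A + \<mu> s C"
  obtains \<nu> where "\<And>A. A \<in> sets M \<Longrightarrow> ((\<lambda>s. \<mu> s A) \<longlongrightarrow> \<nu> A) F"
    "\<And>A. A \<in> sets M \<Longrightarrow> 0 \<le> \<nu> A \<and> \<nu> A \<le> B * measure M A"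
    "\<And>A C. A \<in> sets M \<Longrightarrow> C \<in> sets M \<Longrightarrow> A \<inter> C = {} \<Longrightarrow> \<nu> (A \<union> C) = \<nu> A + \<nu> C"
proof -
  have F_nontriv: "F \<noteq> bot" using F unfolding ultrafilter_def by simp
  define \<nu> where "\<nu> A = Lim F (\<lambda>s. \<mu> s A)" for A
  have \<nu>: "((\<lambda>s. \<mu> s A) \<longlongrightarrow> \<nu> A) F \<and> 0 \<le> \<nu> A \<and> \<nu> A \<le> B * measure M A"
    if A: "A \<in> sets M" for A
  proof -
    have "eventually (\<lambda>s. \<mu> s A \<in> {0 .. B * measure M A}) F"
      using dom[OF A] by (intro always_eventually) simp
    then obtain L where "L \<in> {0 .. B * measure M A}" "((\<lambda>s. \<mu> s A) \<longlongrightarrow> L) F"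
      by (rule ultrafilter_tendsto_Icc[OF F])
    moreover from this(2) have "\<nu> A = L" unfolding \<nu>_def using F_nontriv by (intro tendsto_Lim)
    ultimately show ?thesis by auto
  qed
  have "\<nu> (A \<union> C) = \<nu> A + \<nu> C" if AC: "A \<in> sets M" "C \<in> sets M" "A \<inter> C = {}" for A C
  proof -
    have "((\<lambda>s. \<mu> s A + \<mu> s C) \<longlongrightarrow> \<nu> A + \<nu> C) F"
      using \<nu>[OF AC(1)] \<nu>[OF AC(2)] by (intro tendsto_add) auto
    moreover have "((\<lambda>s. \<mu> s A + \<mu> s C) \<longlongrightarrow> \<nu> (A \<union> C)) F"
      using \<nu>[of "A \<union> C"] add[OF AC] AC by simp
    ultimately show ?thesis using tendsto_unique[OF F_nontriv] by blast
  qed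
  with \<nu> show thesis by (intro that) auto
qed

lemma ultrafilter_limit_density:
  fixes k :: "'b \<Rightarrow> 'a \<Rightarrow> real"
  assumes F: "ultrafilter F"
    and k: "\<And>s. k s \<in> borel_measurable M" "\<And>s. AE y in M. 0 \<le> k s y" "\<And>s. AE y in M. k s y \<le> B"
  obtains d where "d \<in> borel_measurable M" "\<And>y. 0 \<le> d y" "integrable M d" "AE y in M. d y \<le> B"
    "\<And>A. A \<in> sets M \<Longrightarrow>
       ((\<lambda>s. integral\<^sup>L M (\<lambda>y. indicator A y * k s y)) \<longlongrightarrow> integral\<^sup>L M (\<lambda>y. indicator A y * d y)) F"
proof -
  define \<mu> where "\<mu> s A = integral\<^sup>L M (\<lambda>y. indicator A y * k s y)" for s A
  have int: "integrable M (\<lambda>y. indicator A y * k s y)" if "A \<in> sets M" for A s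
    by (rule integrable_indicator_mult_bounded[OF that k(1), of _ B])
      (use k(2)[of s] k(3)[of s] in \<open>eventually_elim, simp\<close>)
  have dom: "0 \<le> \<mu> s A \<and> \<mu> s A \<le> B * measure M A" if A: "A \<in> sets M" for s A
  proof
    show "0 \<le> \<mu> s A" unfolding \<mu>_def
      by (rule integral_nonneg_AE) (use k(2)[of s] in \<open>eventually_elim, simp\<close>)
    have "\<mu> s A \<le> integral\<^sup>L M (\<lambda>y. indicator A y * B)" unfolding \<mu>_def
      by (rule integral_mono_AE[OF int[OF A] integrable_indicator_mult_const[OF A]])
        (use k(3)[of s] in \<open>eventually_elim, simp add: indicator_def\<close>)
    then show "\<mu> s A \<le> B * measure M A" using A by (simp add: mult.commute)
  qed
  have add: "\<mu> s (A \<union> C) = \<mu> s A + \<mu> s C" if AC: "A \<in> sets M" "C \<in> sets M" "A \<inter> C = {}" for s A C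
  proof -
    have "(\<lambda>y. indicator (A \<union> C) y * k s y) = (\<lambda>y. indicator A y * k s y + indicator C y * k s y)"
      using AC(3) by (auto simp: indicator_def fun_eq_iff)
    then show ?thesis unfolding \<mu>_def using int AC by (simp add: Bochner_Integration.integral_add)
  qed
  obtain \<nu> where \<nu>: "\<And>A. A \<in> sets M \<Longrightarrow> ((\<lambda>s. \<mu> s A) \<longlongrightarrow> \<nu> A) F"
    "\<And>A. A \<in> sets M \<Longrightarrow> 0 \<le> \<nu> A \<and> \<nu> A \<le> B * measure M A"
    "\<And>A C. A \<in> sets M \<Longrightarrow> C \<in> sets M \<Longrightarrow> A \<inter> C = {} \<Longrightarrow> \<nu> (A \<union> C) = \<nu> A + \<nu> C"
    by (rule ultrafilter_limit_dominated_additive[where \<mu> = \<mu>, OF F dom add]) auto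
  obtain d where d: "d \<in> borel_measurable M" "\<And>y. 0 \<le> d y" "integrable M d"
    "\<And>A. A \<in> sets M \<Longrightarrow> integral\<^sup>L M (\<lambda>y. indicator A y * d y) = \<nu> A"
    by (rule density_if_dominated[OF \<nu>(3,2)]) auto
  moreover have "AE y in M. d y \<le> B"
    using d \<nu>(2) by (intro AE_le_if_set_integrals_le) auto
  ultimately show thesis using \<nu>(1) unfolding \<mu>_def by (intro that) auto
qed

lemma integral_mult_indicator_shift:
  assumes "A \<in> sets M" "integrable M (\<lambda>y. indicator A y * (b y + C))"
  shows "integral\<^sup>L M (\<lambda>y. b y * indicator A y) =
    integral\<^sup>L M (\<lambda>y. indicator A y * (b y + C)) - C * measure M A"
proof -
  have "(\<lambda>y. b y * indicator A y) = (\<lambda>y. indicator A y * (b y + C) - indicator A y * C)"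
    by (auto simp: fun_eq_iff algebra_simps)
  then show ?thesis using assms integrable_indicator_mult_const[OF assms(1)] by (simp add: mult.commute)
qed

lemma ultrafilter_weak_limit:
  fixes g :: "'b \<Rightarrow> 'a \<Rightarrow> real"
  assumes F: "ultrafilter F" and g: "\<And>s. g s \<in> borel_measurable M" "\<And>s. AE y in M. \<bar>g s y\<bar> \<le> C"
  obtains h where "h \<in> borel_measurable M" "AE y in M. \<bar>h y\<bar> \<le> C"
    "\<And>\<phi>. integrable M \<phi> \<Longrightarrow>
      ((\<lambda>s. integral\<^sup>L M (\<lambda>y. g s y * \<phi> y)) \<longlongrightarrow> integral\<^sup>L M (\<lambda>y. h y * \<phi> y)) F"
proof -
  \<comment> \<open>Shift by \<open>C\<close> to a nonnegative family, take the limit density, and shift back.\<close>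
  define k where "k s y = g s y + C" for s y
  have k: "\<And>s. k s \<in> borel_measurable M" "\<And>s. AE y in M. 0 \<le> k s y" "\<And>s. AE y in M. k s y \<le> 2 * C"
  proof -
    show "k s \<in> borel_measurable M" for s unfolding k_def using g(1) by simp
    show "AE y in M. 0 \<le> k s y" "AE y in M. k s y \<le> 2 * C" for s
      using g(2)[of s] by (eventually_elim, simp add: k_def abs_le_iff)+
  qed
  obtain d where d: "d \<in> borel_measurable M" "\<And>y. 0 \<le> d y" "integrable M d" "AE y in M. d y \<le> 2 * C"
    "\<And>A. A \<in> sets M \<Longrightarrow>
       ((\<lambda>s. integral\<^sup>L M (\<lambda>y. indicator A y * k s y)) \<longlongrightarrow> integral\<^sup>L M (\<lambda>y. indicator A y * d y)) F"
    by (rule ultrafilter_limit_density[where k = k, OF F k]) auto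
  define h where "h y = d y - C" for y
  have h: "h \<in> borel_measurable M" "AE y in M. \<bar>h y\<bar> \<le> C"
  proof -
    show "h \<in> borel_measurable M" unfolding h_def using d(1) by simp
    show "AE y in M. \<bar>h y\<bar> \<le> C"
      using d(4) by eventually_elim (use d(2) in \<open>simp add: h_def abs_le_iff\<close>)
  qed
  have ind: "((\<lambda>s. integral\<^sup>L M (\<lambda>y. g s y * indicator A y)) \<longlongrightarrow> integral\<^sup>L M (\<lambda>y. h y * indicator A y)) F"
    if A: "A \<in> sets M" for A
  proof -
    have "integrable M (\<lambda>y. indicator A y * k s y)" for s
      by (rule integrable_indicator_mult_bounded[OF A k(1), of _ "2 * C"])
        (use k(2)[of s] k(3)[of s] in \<open>eventually_elim, simp\<close>)
    then have "integral\<^sup>L M (\<lambda>y. g s y * indicator A y) =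
        integral\<^sup>L M (\<lambda>y. indicator A y * k s y) - C * measure M A" for s
      using integral_mult_indicator_shift[OF A, of "g s"] unfolding k_def by simp
    moreover have "d = (\<lambda>y. h y + C)" unfolding h_def by simp
    then have "integral\<^sup>L M (\<lambda>y. h y * indicator A y) =
        integral\<^sup>L M (\<lambda>y. indicator A y * d y) - C * measure M A"
      using integral_mult_indicator_shift[OF A, of h] integrable_mult_indicator[OF A d(3)] by simp
    ultimately show ?thesis by (simp only:) (intro tendsto_diff d(5)[OF A] tendsto_const)
  qed
  show thesis
  proof (rule that[OF h])
    fix \<phi> :: "'a \<Rightarrow> real" assume \<phi>: "integrable M \<phi>"
    show "((\<lambda>s. integral\<^sup>L M (\<lambda>y. g s y * \<phi> y)) \<longlongrightarrow> integral\<^sup>L M (\<lambda>y. h y * \<phi> y)) F"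
      by (rule tendsto_integral_mult_if_indicators[OF g h _ \<phi>]) (rule ind)
  qed
qed
end

section \<open>Weak* limits of translates\<close>

definition exp_weight :: "real \<Rightarrow> real" where
  "exp_weight y = indicator {0..} y * exp (- y)"

text \<open>A finite measure with the same null sets as Lebesgue measure on \<open>[0,\<infinity>)\<close>: bounded functions
  are integrable for it, and an \<open>L\<^sup>1\<close> test function \<open>g\<close> becomes \<open>g y * exp y\<close>.\<close>

definition exp_weighted :: "real measure" where
  "exp_weighted = density lebesgue (\<lambda>y. ennreal (exp_weight y))"

lemma exp_weight_measurable [measurable]: "exp_weight \<in> borel_measurable lebesgue"
proof -
  have "(\<lambda>x::real. exp (- x)) \<in> borel_measurable lebesgue" by (rule measurable_completion) simp
  then show ?thesis unfolding exp_weight_def by (intro borel_measurable_times borel_measurable_indicator) auto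
qed

lemma exp_weight_nonneg: "0 \<le> exp_weight y"
  unfolding exp_weight_def by simp

lemma exp_weight_pos_iff: "0 < exp_weight y \<longleftrightarrow> 0 \<le> y"
  unfolding exp_weight_def by (simp add: indicator_def)

lemma sets_exp_weighted [simp, measurable_cong]: "sets exp_weighted = sets lebesgue"
  unfolding exp_weighted_def by simp

lemma measurable_exp_weighted_iff: "f \<in> borel_measurable exp_weighted \<longleftrightarrow> f \<in> borel_measurable lebesgue"
  unfolding measurable_cong_sets[OF sets_exp_weighted refl, of borel] ..

lemma finite_measure_exp_weighted: "finite_measure exp_weighted"
proof (rule finite_measureI)
  have "(\<lambda>x. exp (- 1 * x)) integrable_on {0::real..}"
    using integrable_on_exp_minus_to_infinity[of 1 0] by simp
  then have "(\<lambda>x. exp (- 1 * x)) absolutely_integrable_on {0::real..}"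
    by (rule nonnegative_absolutely_integrable_1) auto
  then have "integrable lebesgue exp_weight" unfolding set_integrable_def exp_weight_def by simp
  then have "(\<integral>\<^sup>+ y. ennreal (norm (exp_weight y)) \<partial>lebesgue) < \<infinity>"
    unfolding integrable_iff_bounded by simp
  moreover have "emeasure exp_weighted (space exp_weighted) = (\<integral>\<^sup>+ y. ennreal (norm (exp_weight y)) \<partial>lebesgue)"
    unfolding exp_weighted_def by (subst emeasure_density) (auto simp: exp_weight_nonneg)
  ultimately show "emeasure exp_weighted (space exp_weighted) \<noteq> \<infinity>" by simp
qed

interpretation exp_weighted: finite_measure exp_weighted
  by (rule finite_measure_exp_weighted)

lemma AE_exp_weighted: "(AE y in exp_weighted. P y) \<longleftrightarrow> (AE y in lebesgue. 0 \<le> y \<longrightarrow> P y)"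
  unfolding exp_weighted_def by (subst AE_density) (auto simp: exp_weight_pos_iff)

lemma integral_exp_weighted_eq_set_integral:
  assumes b: "b \<in> borel_measurable lebesgue" and g: "set_integrable lebesgue {0..} g"
  shows "integral\<^sup>L exp_weighted (\<lambda>y. b y * (indicator {0..} y * g y * exp y)) =
    integral\<^sup>L lebesgue (\<lambda>y. b y * (indicator {0..} y * g y))"
proof -
  have "(\<lambda>y. indicator {0..} y * g y) \<in> borel_measurable lebesgue"
    using g unfolding set_integrable_def by auto
  moreover have "(\<lambda>y::real. exp y) \<in> borel_measurable lebesgue" by (rule measurable_completion) simp
  ultimately have "integral\<^sup>L exp_weighted (\<lambda>y. b y * (indicator {0..} y * g y * exp y)) =
      integral\<^sup>L lebesgue (\<lambda>y. exp_weight y * (b y * (indicator {0..} y * g y * exp y)))"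
    using b unfolding exp_weighted_def by (subst integral_density) (auto simp: exp_weight_nonneg)
  also have "(\<lambda>y. exp_weight y * (b y * (indicator {0..} y * g y * exp y))) = (\<lambda>y. b y * (indicator {0..} y * g y))"
    by (auto simp: fun_eq_iff exp_weight_def exp_minus indicator_def field_simps)
  finally show ?thesis .
qed

lemma integrable_exp_weighted_of_set_integrable:
  assumes "set_integrable lebesgue {0..} g"
  shows "integrable exp_weighted (\<lambda>y. indicator {0..} y * g y * exp y)"
proof -
  have gi: "integrable lebesgue (\<lambda>y. indicator {0..} y * g y)"
    using assms unfolding set_integrable_def by simp
  moreover have "(\<lambda>y::real. exp y) \<in> borel_measurable lebesgue" by (rule measurable_completion) simp
  ultimately have "(\<lambda>y. indicator {0..} y * g y * exp y) \<in> borel_measurable lebesgue" by auto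
  moreover have "(\<lambda>y. exp_weight y * (indicator {0..} y * g y * exp y)) = (\<lambda>y. indicator {0..} y * g y)"
    by (auto simp: fun_eq_iff exp_weight_def exp_minus indicator_def field_simps)
  ultimately show ?thesis
    using gi unfolding exp_weighted_def by (subst integrable_density) (auto simp: exp_weight_nonneg)
qed


lemma weak_star_lim_exists:
  assumes f: "f \<in> Linf" and F: "ultrafilter F" and F0: "eventually (\<lambda>s. 0 \<le> s) F"
  shows "\<exists>h. weak_star_lim F f h"
proof -
  obtain C where C: "AE x in lebesgue. 0 \<le> x \<longrightarrow> \<bar>f x\<bar> \<le> C" using LinfE[OF f] by metis
  define g where "g s y = indicator {0..} y * f (y + max s 0)" for s y
  have g_meas: "g s \<in> borel_measurable exp_weighted" for s
    unfolding g_def measurable_exp_weighted_iff by (rule Linf_measurable[OF Linf_shift[OF f]]) simp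
  have g_bound: "AE y in exp_weighted. \<bar>g s y\<bar> \<le> C" for s
    unfolding AE_exp_weighted g_def using AE_nonneg_shift[OF C, of "max s 0"] by (auto elim!: eventually_mono)
  obtain h where h: "h \<in> borel_measurable exp_weighted" "AE y in exp_weighted. \<bar>h y\<bar> \<le> C"
    "\<And>\<phi>. integrable exp_weighted \<phi> \<Longrightarrow>
      ((\<lambda>s. integral\<^sup>L exp_weighted (\<lambda>y. g s y * \<phi> y)) \<longlongrightarrow> integral\<^sup>L exp_weighted (\<lambda>y. h y * \<phi> y)) F"
    by (rule exp_weighted.ultrafilter_weak_limit[where g = g, OF F g_meas g_bound]) auto
  have h_meas: "h \<in> borel_measurable lebesgue" using h(1) measurable_exp_weighted_iff by blast
  have "h \<in> Linf"
  proof (rule LinfI)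
    show "(\<lambda>x. indicator {0..} x * h x) \<in> borel_measurable lebesgue"
      using h_meas by (intro borel_measurable_times borel_measurable_indicator) auto
    show "AE x in lebesgue. 0 \<le> x \<longrightarrow> \<bar>h x\<bar> \<le> C" using h(2) unfolding AE_exp_weighted .
  qed
  moreover have "((\<lambda>s. LINT y:{0..}|lebesgue. f (y + s) * g0 y) \<longlongrightarrow> (LINT y:{0..}|lebesgue. h y * g0 y)) F"
    if g0: "set_integrable lebesgue {0..} g0" for g0
  proof -
    have "(\<lambda>y. b y * (indicator {0..} y * g0 y)) = (\<lambda>y. indicator {0..} y *\<^sub>R (b y * g0 y))" for b :: "real \<Rightarrow> real"
      by (auto simp: fun_eq_iff)
    note untwist = integral_exp_weighted_eq_set_integral[OF _ g0, unfolded this, folded set_lebesgue_integral_def]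
    have "(\<lambda>y. indicator {0..} y * (g s y * g0 y)) = (\<lambda>y. indicator {0..} y * (f (y + s) * g0 y))"
      if "0 \<le> s" for s
      using that by (auto simp: fun_eq_iff g_def indicator_def)
    then have "eventually (\<lambda>s. integral\<^sup>L exp_weighted (\<lambda>y. g s y * (indicator {0..} y * g0 y * exp y)) =
        (LINT y:{0..}|lebesgue. f (y + s) * g0 y)) F"
      using F0 untwist g_meas unfolding measurable_exp_weighted_iff
      by (auto elim!: eventually_mono simp: set_lebesgue_integral_def)
    moreover have "integral\<^sup>L exp_weighted (\<lambda>y. h y * (indicator {0..} y * g0 y * exp y)) =
        (LINT y:{0..}|lebesgue. h y * g0 y)"
      using untwist[OF h_meas] .
    ultimately show ?thesis
      using h(3)[OF integrable_exp_weighted_of_set_integrable[OF g0]] by (auto intro: Lim_transform_eventually)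
  qed
  ultimately show ?thesis unfolding weak_star_lim_def by blast
qed

section \<open>The functionals of Q1\<close>

lemma ultrafilter_omega_filter: "ultrafilter \<eta> \<Longrightarrow> ultrafilter (omega_filter \<eta> t)"
  unfolding omega_filter_def by (rule ultrafilter_filtermap)

lemma eventually_ge_omega_filter:
  assumes "\<eta> \<le> sequentially" "0 \<le> t"
  shows "eventually (\<lambda>s. X \<le> s) (omega_filter \<eta> t)"
proof -
  have "eventually (\<lambda>n. nat \<lceil>X\<rceil> \<le> n) \<eta>"
    by (rule filter_leD[OF assms(1) eventually_ge_at_top])
  then show ?thesis unfolding omega_filter_def eventually_filtermap
    by (rule eventually_mono) (use assms(2) in linarith)
qed

locale omega_point =
  fixes \<eta> :: "nat filter" and t :: real
  assumes ultra: "ultrafilter \<eta>" and free: "\<eta> \<le> sequentially" and t: "0 \<le> t"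
begin

abbreviation "\<Omega> \<equiv> omega_filter \<eta> t"

lemma \<Omega>_nontrivial: "\<Omega> \<noteq> bot"
  using ultrafilter_omega_filter[OF ultra] unfolding ultrafilter_def by simp

lemma eventually_ge_\<Omega>: "eventually (\<lambda>s. X \<le> s) \<Omega>"
  by (rule eventually_ge_omega_filter[OF free t])

lemma weak_star_lim_f_omega:
  assumes "f \<in> Linf" shows "weak_star_lim \<Omega> f (f_omega \<eta> t f)"
  unfolding f_omega_def
  by (rule someI_ex[OF weak_star_lim_exists[OF assms ultrafilter_omega_filter[OF ultra] eventually_ge_\<Omega>]])

lemma tendsto_primitive_f_omega:
  assumes f: "f \<in> Linf" and x: "0 \<le> x"
  shows "((\<lambda>s. primitive f (s + x) - primitive f s) \<longlongrightarrow> primitive (f_omega \<eta> t f) x) \<Omega>"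
proof -
  have "set_integrable lebesgue {0..} (indicator {0..x} :: real \<Rightarrow> real)"
  proof -
    have "integrable lebesgue (indicator {0..x} :: real \<Rightarrow> real)"
      by (rule integrable_real_indicator) (use x in auto)
    moreover have "(\<lambda>y. indicator {0..} y *\<^sub>R indicator {0..x} y) = (indicator {0..x} :: real \<Rightarrow> real)"
      using x by (auto simp: fun_eq_iff indicator_def)
    ultimately show ?thesis unfolding set_integrable_def by simp
  qed
  then have "((\<lambda>s. LINT y:{0..}|lebesgue. f (y + s) * indicator {0..x} y) \<longlongrightarrow>
      (LINT y:{0..}|lebesgue. f_omega \<eta> t f y * indicator {0..x} y)) \<Omega>"
    using weak_star_lim_f_omega[OF f] unfolding weak_star_lim_def by blast
  moreover have "(LINT y:{0..}|lebesgue. q y * indicator {0..x} y) = (LINT y:{0..x}|lebesgue. q y)"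
    for q :: "real \<Rightarrow> real"
    unfolding set_lebesgue_integral_def using x
    by (intro arg_cong[where f = "integral\<^sup>L lebesgue"]) (auto simp: fun_eq_iff indicator_def)
  ultimately have "((\<lambda>s. LINT y:{0..x}|lebesgue. f (y + s)) \<longlongrightarrow> primitive (f_omega \<eta> t f) x) \<Omega>"
    unfolding primitive_def by simp
  then show ?thesis
    by (rule Lim_transform_eventually)
       (use eventually_ge_\<Omega>[of 0] in \<open>auto elim!: eventually_mono simp: set_integral_shift_primitive[OF f _ x]\<close>)
qed

lemma primitive_f_omega_unique:
  assumes "f \<in> Linf" "0 \<le> x" "((\<lambda>s. primitive f (s + x) - primitive f s) \<longlongrightarrow> L) \<Omega>"
  shows "primitive (f_omega \<eta> t f) x = L"
  using tendsto_unique[OF \<Omega>_nontrivial tendsto_primitive_f_omega[OF assms(1,2)] assms(3)] .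

lemma primitive_f_omega_add:
  assumes f: "f \<in> Linf" and g: "g \<in> Linf" and x: "0 \<le> x"
  shows "primitive (f_omega \<eta> t (\<lambda>y. f y + g y)) x =
    primitive (f_omega \<eta> t f) x + primitive (f_omega \<eta> t g) x"
proof (rule primitive_f_omega_unique[OF Linf_add[OF f g] x])
  have "((\<lambda>s. (primitive f (s + x) - primitive f s) + (primitive g (s + x) - primitive g s)) \<longlongrightarrow>
      primitive (f_omega \<eta> t f) x + primitive (f_omega \<eta> t g) x) \<Omega>"
    by (intro tendsto_add tendsto_primitive_f_omega f g x)
  then show "((\<lambda>s. primitive (\<lambda>y. f y + g y) (s + x) - primitive (\<lambda>y. f y + g y) s) \<longlongrightarrow>
      primitive (f_omega \<eta> t f) x + primitive (f_omega \<eta> t g) x) \<Omega>"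
    by (rule Lim_transform_eventually)
       (use eventually_ge_\<Omega>[of 0] x in \<open>auto elim!: eventually_mono simp: primitive_add[OF f g]\<close>)
qed

lemma primitive_f_omega_cmult:
  assumes f: "f \<in> Linf" and x: "0 \<le> x"
  shows "primitive (f_omega \<eta> t (\<lambda>y. c * f y)) x = c * primitive (f_omega \<eta> t f) x"
proof (rule primitive_f_omega_unique[OF Linf_cmult[OF f] x])
  show "((\<lambda>s. primitive (\<lambda>y. c * f y) (s + x) - primitive (\<lambda>y. c * f y) s) \<longlongrightarrow>
      c * primitive (f_omega \<eta> t f) x) \<Omega>"
    using tendsto_mult_left[OF tendsto_primitive_f_omega[OF f x], of c]
    by (simp add: primitive_cmult right_diff_distrib)
qed

lemma primitive_f_omega_const:
  assumes x: "0 \<le> x" shows "primitive (f_omega \<eta> t (\<lambda>y. c)) x = c * x"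
proof (rule primitive_f_omega_unique[OF Linf_const x])
  show "((\<lambda>s. primitive (\<lambda>y. c) (s + x) - primitive (\<lambda>y. c) s) \<longlongrightarrow> c * x) \<Omega>"
    by (rule Lim_transform_eventually[OF tendsto_const])
       (use eventually_ge_\<Omega>[of 0] x in \<open>auto elim!: eventually_mono simp: primitive_const algebra_simps\<close>)
qed

lemma primitive_f_omega_zero: "f \<in> Linf \<Longrightarrow> primitive (f_omega \<eta> t f) 0 = 0"
  by (rule primitive_f_omega_unique) auto

lemma primitive_f_omega_nonneg:
  assumes f: "f \<in> Linf" and pos: "AE x in lebesgue. x \<ge> 0 \<longrightarrow> f x \<ge> 0" and x: "0 \<le> x"
  shows "0 \<le> primitive (f_omega \<eta> t f) x"
  by (rule tendsto_lowerbound[OF tendsto_primitive_f_omega[OF f x] _ \<Omega>_nontrivial])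
     (use eventually_ge_\<Omega>[of 0] primitive_mono[OF f pos] x in \<open>auto elim!: eventually_mono\<close>)

lemma tendsto_increment_primitive_f_omega:
  assumes f: "f \<in> Linf" and ab: "0 \<le> a" "a \<le> b"
  shows "((\<lambda>s. primitive f (s + b) - primitive f (s + a)) \<longlongrightarrow>
    primitive (f_omega \<eta> t f) b - primitive (f_omega \<eta> t f) a) \<Omega>"
  using tendsto_diff[OF tendsto_primitive_f_omega[OF f, of b] tendsto_primitive_f_omega[OF f, of a]] ab
  by simp

lemma primitive_f_omega_lipschitz:
  assumes f: "f \<in> Linf" and C: "\<And>a b. 0 \<le> a \<Longrightarrow> a \<le> b \<Longrightarrow> \<bar>primitive f b - primitive f a\<bar> \<le> C * (b - a)"
    and ab: "0 \<le> a" "a \<le> b"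
  shows "\<bar>primitive (f_omega \<eta> t f) b - primitive (f_omega \<eta> t f) a\<bar> \<le> C * (b - a)"
proof (rule tendsto_upperbound[OF tendsto_rabs[OF tendsto_increment_primitive_f_omega[OF f ab]] _ \<Omega>_nontrivial])
  show "eventually (\<lambda>s. \<bar>primitive f (s + b) - primitive f (s + a)\<bar> \<le> C * (b - a)) \<Omega>"
    using eventually_ge_\<Omega>[of 0]
  proof (rule eventually_mono)
    fix s :: real assume "0 \<le> s"
    then show "\<bar>primitive f (s + b) - primitive f (s + a)\<bar> \<le> C * (b - a)" using C[of "s + a" "s + b"] ab by simp
  qed
qed

lemma primitive_f_omega_window:
  assumes f: "f \<in> Linf" and X: "\<And>x. x \<ge> X \<Longrightarrow> primitive f (x + \<theta>) - primitive f x \<le> \<theta> * B"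
    and a: "0 \<le> a" and th: "0 < \<theta>"
  shows "primitive (f_omega \<eta> t f) (a + \<theta>) - primitive (f_omega \<eta> t f) a \<le> \<theta> * B"
proof (rule tendsto_upperbound[OF tendsto_increment_primitive_f_omega[OF f a] _ \<Omega>_nontrivial])
  show "eventually (\<lambda>s. primitive f (s + (a + \<theta>)) - primitive f (s + a) \<le> \<theta> * B) \<Omega>"
    using eventually_ge_\<Omega>[of X]
  proof (rule eventually_mono)
    fix s assume "X \<le> s"
    then show "primitive f (s + (a + \<theta>)) - primitive f (s + a) \<le> \<theta> * B"
      using X[of "s + a"] a by (simp add: add.assoc)
  qed
qed (use th in simp)

end

locale omega_mean = omega_point +
  fixes U :: "real filter"
  assumes U_ultra: "ultrafilter U" and U_le: "U \<le> at_top"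
begin

lemma U_nontrivial: "U \<noteq> bot"
  using U_ultra unfolding ultrafilter_def by simp

lemma eventually_ge_U: "eventually (\<lambda>x. X \<le> x) U"
  by (rule filter_leD[OF U_le eventually_ge_at_top])

lemma tendsto_qfun:
  assumes f: "f \<in> Linf"
  shows "((\<lambda>x. (1 / x) * primitive (f_omega \<eta> t f) x) \<longlongrightarrow> qfun \<eta> t U f) U"
proof -
  obtain C where C: "\<And>a b. 0 \<le> a \<Longrightarrow> a \<le> b \<Longrightarrow> \<bar>primitive f b - primitive f a\<bar> \<le> C * (b - a)"
    using primitive_lipschitzE[OF f] by metis
  have "eventually (\<lambda>x. (1 / x) * primitive (f_omega \<eta> t f) x \<in> {-C..C}) U"
    using eventually_ge_U[of 1]
  proof (rule eventually_mono)
    fix x :: real assume x: "1 \<le> x"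
    have "\<bar>primitive (f_omega \<eta> t f) x\<bar> \<le> C * x"
      using primitive_f_omega_lipschitz[OF f C, of 0 x] primitive_f_omega_zero[OF f] x by simp
    then have "\<bar>(1 / x) * primitive (f_omega \<eta> t f) x\<bar> \<le> C"
      using x by (simp add: abs_mult divide_le_eq mult.commute)
    then show "(1 / x) * primitive (f_omega \<eta> t f) x \<in> {-C..C}"
      unfolding atLeastAtMost_iff abs_le_iff by linarith
  qed
  then obtain L where L: "((\<lambda>x. (1 / x) * primitive (f_omega \<eta> t f) x) \<longlongrightarrow> L) U"
    by (rule ultrafilter_tendsto_Icc[OF U_ultra])
  moreover from L have "qfun \<eta> t U f = L"
    unfolding qfun_def primitive_def using f U_nontrivial by (simp add: tendsto_Lim)
  ultimately show ?thesis by simp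
qed

lemma qfun_unique:
  assumes "f \<in> Linf" "eventually (\<lambda>x. a x = (1 / x) * primitive (f_omega \<eta> t f) x) U" "(a \<longlongrightarrow> L) U"
  shows "qfun \<eta> t U f = L"
  using tendsto_unique[OF U_nontrivial tendsto_qfun[OF assms(1)] Lim_transform_eventually[OF assms(3,2)]] .

lemma qfun_add:
  assumes f: "f \<in> Linf" and g: "g \<in> Linf"
  shows "qfun \<eta> t U (\<lambda>x. f x + g x) = qfun \<eta> t U f + qfun \<eta> t U g"
proof (rule qfun_unique[OF Linf_add[OF f g] _ tendsto_add[OF tendsto_qfun[OF f] tendsto_qfun[OF g]]])
  show "eventually (\<lambda>x. (1 / x) * primitive (f_omega \<eta> t f) x + (1 / x) * primitive (f_omega \<eta> t g) x =
      (1 / x) * primitive (f_omega \<eta> t (\<lambda>x. f x + g x)) x) U"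
    using eventually_ge_U[of 0] by (rule eventually_mono) (simp add: primitive_f_omega_add[OF f g] distrib_left)
qed

lemma qfun_cmult:
  assumes f: "f \<in> Linf"
  shows "qfun \<eta> t U (\<lambda>x. c * f x) = c * qfun \<eta> t U f"
proof (rule qfun_unique[OF Linf_cmult[OF f] _ tendsto_mult_left[OF tendsto_qfun[OF f]]])
  show "eventually (\<lambda>x. c * ((1 / x) * primitive (f_omega \<eta> t f) x) =
      (1 / x) * primitive (f_omega \<eta> t (\<lambda>x. c * f x)) x) U"
    using eventually_ge_U[of 0] by (rule eventually_mono) (simp add: primitive_f_omega_cmult[OF f])
qed

lemma qfun_const: "qfun \<eta> t U (\<lambda>_. 1) = 1"
proof (rule qfun_unique[OF Linf_const _ tendsto_const])
  show "eventually (\<lambda>x. 1 = (1 / x) * primitive (f_omega \<eta> t (\<lambda>_. 1)) x) U"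
    using eventually_ge_U[of 1] by (rule eventually_mono) (simp add: primitive_f_omega_const)
qed

lemma qfun_nonneg:
  assumes f: "f \<in> Linf" and pos: "AE x in lebesgue. 0 \<le> x \<longrightarrow> 0 \<le> f x"
  shows "0 \<le> qfun \<eta> t U f"
proof (rule tendsto_lowerbound[OF tendsto_qfun[OF f] _ U_nontrivial])
  show "eventually (\<lambda>x. 0 \<le> (1 / x) * primitive (f_omega \<eta> t f) x) U"
    using eventually_ge_U[of 0] by (rule eventually_mono) (simp add: primitive_f_omega_nonneg[OF f pos])
qed

lemma qfun_le_upper_mean:
  assumes f: "f \<in> Linf"
  shows "qfun \<eta> t U f \<le> upper_mean_real f"
proof (rule field_le_epsilon)
  fix \<epsilon> :: real assume e: "0 < \<epsilon>"
  obtain C where C: "C \<ge> 0" "\<And>a b. 0 \<le> a \<Longrightarrow> a \<le> b \<Longrightarrow> \<bar>primitive f b - primitive f a\<bar> \<le> C * (b - a)"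
    using primitive_lipschitzE[OF f] by metis
  define B where "B = upper_mean_real f + \<epsilon>"
  obtain \<theta> X where th: "\<theta> > 0" "X \<ge> 0" "\<And>x. x \<ge> X \<Longrightarrow> primitive f (x + \<theta>) - primitive f x \<le> \<theta> * B"
    using eventually_increment_le_upper_mean[OF f e] unfolding B_def by metis
  define K where "K = \<theta> * (C + \<bar>B\<bar>)"
  \<comment> \<open>Windows of length \<open>\<theta>\<close> beyond \<open>X\<close> have increments at most \<open>\<theta> B\<close>, and this passes to \<open>f_omega\<close>.\<close>
  have bound: "(1 / x) * primitive (f_omega \<eta> t f) x \<le> B + K / x" if x: "1 \<le> x" for x
  proof -
    have "primitive (f_omega \<eta> t f) (0 + x) - primitive (f_omega \<eta> t f) 0 \<le> x * B + K"
      unfolding K_def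
    proof (rule increment_le_of_window_increments[OF th(1)])
      fix a :: real assume "0 \<le> a"
      then show "primitive (f_omega \<eta> t f) (a + \<theta>) - primitive (f_omega \<eta> t f) a \<le> \<theta> * B"
        using primitive_f_omega_window[OF f th(3) _ th(1)] by blast
    next
      fix a b :: real assume "0 \<le> a" "a \<le> b"
      then show "\<bar>primitive (f_omega \<eta> t f) b - primitive (f_omega \<eta> t f) a\<bar> \<le> C * (b - a)"
        using primitive_f_omega_lipschitz[OF f C(2)] by blast
    qed (use x in simp)
    then have "primitive (f_omega \<eta> t f) x / x \<le> (x * B + K) / x"
      using x primitive_f_omega_zero[OF f] by (simp add: divide_right_mono)
    also have "\<dots> = B + K / x" using x by (simp add: field_simps)
    finally show ?thesis by simp
  qed
  have "((\<lambda>x. B + K / x) \<longlongrightarrow> B + 0) at_top"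
    by (intro tendsto_add tendsto_const tendsto_divide_0[OF tendsto_const]
        filterlim_at_top_imp_at_infinity filterlim_ident)
  then have "((\<lambda>x. B + K / x) \<longlongrightarrow> B) U" using tendsto_mono[OF U_le] by simp
  moreover have "eventually (\<lambda>x. (1 / x) * primitive (f_omega \<eta> t f) x \<le> B + K / x) U"
    using eventually_ge_U[of 1] by (rule eventually_mono) (rule bound)
  ultimately show "qfun \<eta> t U f \<le> upper_mean_real f + \<epsilon>"
    using tendsto_le[OF U_nontrivial _ tendsto_qfun[OF f]] unfolding B_def by blast
qed

lemma qfun_in_M1: "qfun \<eta> t U \<in> M1"
  unfolding M1_def
proof (intro CollectI conjI ballI allI impI)
  show "qfun \<eta> t U f = 0" if "f \<notin> Linf" for f using that by (simp add: qfun_def)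
  show "ereal (qfun \<eta> t U f) \<le> upper_mean f" if "f \<in> Linf" for f
    using qfun_le_upper_mean[OF that] upper_mean_eq[OF that] by simp
qed (simp_all add: qfun_add qfun_cmult qfun_nonneg qfun_const)

end

lemma Q1_subset_M1: "Q1 \<subseteq> M1"
proof
  fix q assume "q \<in> Q1"
  then obtain \<eta> t U where q: "q = qfun \<eta> t U" "ultrafilter \<eta>" "\<eta> \<le> sequentially" "0 \<le> t"
      "ultrafilter U" "U \<le> at_top"
    unfolding Q1_def by blast
  then interpret omega_mean \<eta> t U by unfold_locales
  show "q \<in> M1" using qfun_in_M1 q(1) by simp
qed

section \<open>Functionals of Q1 attaining the upper mean\<close>

lemma minimum_point_rising:
  fixes D :: "real \<Rightarrow> real"
  assumes K: "K \<ge> 0" and th: "\<theta> > 0" and \<Theta>: "0 \<le> \<Theta>"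
    and lip: "\<And>a b. 0 \<le> a \<Longrightarrow> a \<le> b \<Longrightarrow> b \<le> \<Theta> \<Longrightarrow> \<bar>D b - D a\<bar> \<le> K * (b - a)"
    and high: "D 0 + K * \<theta> < D \<Theta>"
  obtains a where "0 \<le> a" "\<And>y. 0 \<le> y \<Longrightarrow> y \<le> \<theta> \<Longrightarrow> D a \<le> D (a + y)"
proof -
  have "K-lipschitz_on {0..\<Theta>} D"
  proof (rule lipschitz_onI)
    fix x y assume "x \<in> {0..\<Theta>}" "y \<in> {0..\<Theta>}"
    then show "dist (D x) (D y) \<le> K * dist x y"
      using lip[of x y] lip[of y x] by (cases "x \<le> y") (auto simp: dist_real_def abs_minus_commute)
  qed (rule K)
  then have "continuous_on {0..\<Theta>} D" by (rule lipschitz_on_continuous_on)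
  then have "\<exists>a\<in>{0..\<Theta>}. \<forall>y\<in>{0..\<Theta>}. D a \<le> D y"
    using continuous_attains_inf[OF compact_Icc] \<Theta> by auto
  then obtain a where a: "0 \<le> a" "a \<le> \<Theta>" "\<And>y. 0 \<le> y \<Longrightarrow> y \<le> \<Theta> \<Longrightarrow> D a \<le> D y" by auto
  have "a + \<theta> \<le> \<Theta>"
  proof (rule ccontr)
    assume "\<not> ?thesis"
    then have "K * (\<Theta> - a) \<le> K * \<theta>" using K by (intro mult_left_mono) auto
    then have "D \<Theta> - D a \<le> K * \<theta>" using lip[OF a(1,2)] by simp
    moreover have "D a \<le> D 0" using a(3)[of 0] \<Theta> by simp
    ultimately show False using high by linarith
  qed
  then show thesis using a by (intro that) auto
qed

lemma rising_sun_point: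
  fixes P :: "real \<Rightarrow> real"
  assumes C: "C \<ge> 0" "\<And>a b. 0 \<le> a \<Longrightarrow> a \<le> b \<Longrightarrow> \<bar>P b - P a\<bar> \<le> C * (b - a)"
    and M: "\<And>\<theta> \<epsilon> T. \<theta> > 0 \<Longrightarrow> \<epsilon> > 0 \<Longrightarrow> \<exists>x\<ge>T. x \<ge> 0 \<and> P (x + \<theta>) - P x \<ge> \<theta> * (M - \<epsilon>)"
    and e: "\<epsilon> > 0" and th: "\<theta> > 0"
  shows "\<exists>a\<ge>T. a \<ge> 0 \<and> (\<forall>y\<in>{0..\<theta>}. P (a + y) - P a \<ge> (M - 2 * \<epsilon>) * y)"
proof -
  define K where "K = C + \<bar>M - 2 * \<epsilon>\<bar>"
  define \<Theta> where "\<Theta> = K * \<theta> / \<epsilon> + \<theta>"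
  have K0: "K \<ge> 0" unfolding K_def using C(1) by simp
  have Tp: "\<Theta> > 0" unfolding \<Theta>_def using K0 e th by (simp add: add_nonneg_pos)
  obtain x0 where x0: "x0 \<ge> T" "x0 \<ge> 0" "P (x0 + \<Theta>) - P x0 \<ge> \<Theta> * (M - \<epsilon>)"
    using M[OF Tp e, of T] by blast
  \<comment> \<open>A window of length \<open>\<Theta>\<close> with slope almost \<open>M\<close> contains a point from which \<open>P\<close> rises with slope
    \<open>M - 2\<epsilon>\<close> for a time \<open>\<theta>\<close>: the minimum of \<open>P\<close> minus that slope on the window.\<close>
  define D where "D y = P (x0 + y) - P x0 - (M - 2 * \<epsilon>) * y" for y
  obtain a where a: "0 \<le> a" "\<And>y. 0 \<le> y \<Longrightarrow> y \<le> \<theta> \<Longrightarrow> D a \<le> D (a + y)"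
  proof (rule minimum_point_rising[OF K0 th less_imp_le[OF Tp]])
    fix a b :: real assume ab: "0 \<le> a" "a \<le> b"
    have "D b - D a = (P (x0 + b) - P (x0 + a)) - (M - 2 * \<epsilon>) * (b - a)"
      by (simp add: D_def algebra_simps)
    moreover have "\<bar>P (x0 + b) - P (x0 + a)\<bar> \<le> C * (b - a)" using C(2)[of "x0 + a" "x0 + b"] ab x0 by simp
    moreover have "\<bar>(M - 2 * \<epsilon>) * (b - a)\<bar> = \<bar>M - 2 * \<epsilon>\<bar> * (b - a)" using ab by (simp add: abs_mult)
    ultimately show "\<bar>D b - D a\<bar> \<le> K * (b - a)" unfolding K_def by (simp add: algebra_simps)
  next
    have "\<epsilon> * \<Theta> = K * \<theta> + \<epsilon> * \<theta>" unfolding \<Theta>_def using e by (simp add: field_simps)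
    then have "K * \<theta> < \<epsilon> * \<Theta>" using e th by simp
    moreover have "\<epsilon> * \<Theta> \<le> D \<Theta>" using x0(3) by (simp add: D_def algebra_simps)
    moreover have "D 0 = 0" by (simp add: D_def)
    ultimately show "D 0 + K * \<theta> < D \<Theta>" by linarith
  qed (rule that)
  show ?thesis
  proof (intro exI[of _ "x0 + a"] conjI ballI)
    show "T \<le> x0 + a" "0 \<le> x0 + a" using x0 a(1) by auto
    fix y assume "y \<in> {0..\<theta>}"
    then have "D a \<le> D (a + y)" using a(2) by simp
    then show "(M - 2 * \<epsilon>) * y \<le> P (x0 + a + y) - P (x0 + a)" by (simp add: D_def algebra_simps)
  qed
qed

lemma integer_rising_point:
  fixes P :: "real \<Rightarrow> real"
  assumes C: "C \<ge> 0" "\<And>a b. 0 \<le> a \<Longrightarrow> a \<le> b \<Longrightarrow> \<bar>P b - P a\<bar> \<le> C * (b - a)"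
    and M: "\<And>\<theta> \<epsilon> T. \<theta> > 0 \<Longrightarrow> \<epsilon> > 0 \<Longrightarrow> \<exists>x\<ge>T. x \<ge> 0 \<and> P (x + \<theta>) - P x \<ge> \<theta> * (M - \<epsilon>)"
  shows "\<exists>n::nat. n \<ge> k \<and> (\<forall>y\<in>{0..real k}. P (real n + y) - P (real n) \<ge> (M - 2 / (real k + 1)) * y - (C + \<bar>M\<bar> + 2))"
proof -
  define \<epsilon> where "\<epsilon> = 1 / (real k + 1)"
  have e: "\<epsilon> > 0" "\<epsilon> \<le> 1" unfolding \<epsilon>_def by (auto simp: field_simps)
  have e2: "2 * \<epsilon> = 2 / (real k + 1)" unfolding \<epsilon>_def by simp
  obtain a where a: "a \<ge> real k" "a \<ge> 0" "\<And>y. y \<in> {0..real k + 1} \<Longrightarrow> P (a + y) - P a \<ge> (M - 2 * \<epsilon>) * y"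
    using rising_sun_point[OF C M e(1), of "real k + 1" "real k"] by auto
  define n where "n = nat \<lceil>a\<rceil>"
  define d where "d = real n - a"
  have d: "0 \<le> d" "d < 1" unfolding d_def n_def using a(2) by linarith+
  have nk: "n \<ge> k" unfolding n_def using a(1) by linarith
  have an: "a + d = real n" unfolding d_def by simp
  show ?thesis
  proof (intro exI[of _ n] conjI ballI nk)
    fix y assume y: "y \<in> {0..real k}"
    have dy: "d + y \<in> {0..real k + 1}" using d y by auto
    have 1: "P (a + (d + y)) - P a \<ge> (M - 2 * \<epsilon>) * (d + y)" by (rule a(3)[OF dy])
    have 2: "P (a + d) - P a \<le> C * d" using C(2)[of a "a + d"] a(2) d by simp
    have 3: "(M - 2 * \<epsilon>) * d \<ge> - (\<bar>M\<bar> + 2)"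
    proof -
      have "\<bar>(M - 2 * \<epsilon>) * d\<bar> = \<bar>M - 2 * \<epsilon>\<bar> * d" using d by (simp add: abs_mult)
      also have "\<dots> \<le> \<bar>M - 2 * \<epsilon>\<bar> * 1" using d by (intro mult_left_mono) auto
      also have "\<dots> \<le> \<bar>M\<bar> + 2" using e by (simp add: abs_le_iff) linarith
      finally show ?thesis by linarith
    qed
    have 4: "C * d \<le> C" using C(1) d by (simp add: mult_left_le)
    have "P (real n + y) - P (real n) = (P (a + (d + y)) - P a) - (P (a + d) - P a)"
      using an by (simp add: add.assoc[symmetric])
    also have "\<dots> \<ge> (M - 2 * \<epsilon>) * (d + y) - C * d" using 1 2 by linarith
    finally have "P (real n + y) - P (real n) \<ge> (M - 2 * \<epsilon>) * y + (M - 2 * \<epsilon>) * d - C * d"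
      by (simp add: distrib_left)
    then show "P (real n + y) - P (real n) \<ge> (M - 2 / (real k + 1)) * y - (C + \<bar>M\<bar> + 2)"
      using 3 4 e2[symmetric] by simp
  qed
qed

lemma eventually_increment_ge_of_rising_points:
  fixes P :: "real \<Rightarrow> real" and ns :: "nat \<Rightarrow> nat"
  assumes ns: "\<And>k y. y \<in> {0..real k} \<Longrightarrow>
      (M - 2 / (real k + 1)) * y - K \<le> P (real (ns k) + y) - P (real (ns k))"
    and x: "0 \<le> x" and \<delta>: "\<delta> > 0"
  shows "eventually (\<lambda>k. (M - \<delta>) * x - K \<le> P (real (ns k) + x) - P (real (ns k))) sequentially"
  using eventually_ge_at_top[of "nat \<lceil>max x (2 / \<delta>)\<rceil>"]
proof (rule eventually_mono)
  fix k assume "nat \<lceil>max x (2 / \<delta>)\<rceil> \<le> k"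
  then have k: "x \<le> real k" "2 / \<delta> \<le> real k" by linarith+
  then have "2 \<le> real k * \<delta>" using \<delta> by (simp add: divide_le_eq)
  then have "2 < (real k + 1) * \<delta>" using \<delta> by (simp add: distrib_right)
  then have "2 / (real k + 1) \<le> \<delta>" by (simp add: divide_le_eq mult.commute)
  then have "(M - \<delta>) * x \<le> (M - 2 / (real k + 1)) * x" using x by (intro mult_right_mono) auto
  then show "(M - \<delta>) * x - K \<le> P (real (ns k) + x) - P (real (ns k))"
    using ns[of x k] k x by auto
qed

context omega_point
begin

lemma primitive_f_omega_lower_bound:
  assumes f: "f \<in> Linf" and x: "0 \<le> x"
    and ev: "\<And>\<delta>. \<delta> > 0 \<Longrightarrow> eventually (\<lambda>s. (M - \<delta>) * x - K \<le> primitive f (s + x) - primitive f s) \<Omega>"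
  shows "M * x - K \<le> primitive (f_omega \<eta> t f) x"
proof (rule field_le_epsilon)
  fix e :: real assume e: "0 < e"
  define \<delta> where "\<delta> = e / (x + 1)"
  have "\<delta> > 0" unfolding \<delta>_def using e x by simp
  then have "(M - \<delta>) * x - K \<le> primitive (f_omega \<eta> t f) x"
    by (intro tendsto_lowerbound[OF tendsto_primitive_f_omega[OF f x] ev \<Omega>_nontrivial])
  moreover have "\<delta> * x \<le> e"
  proof -
    have "\<delta> * x = e * (x / (x + 1))" unfolding \<delta>_def by simp
    also have "\<dots> \<le> e * 1" using e x by (intro mult_left_mono) auto
    finally show ?thesis by simp
  qed
  ultimately show "M * x - K \<le> primitive (f_omega \<eta> t f) x + e" by (simp add: left_diff_distrib)
qed

end

context omega_mean
begin

lemma qfun_ge_of_lower_bound: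
  assumes f: "f \<in> Linf" and lower: "\<And>x. 0 \<le> x \<Longrightarrow> M * x - K \<le> primitive (f_omega \<eta> t f) x"
  shows "M \<le> qfun \<eta> t U f"
proof -
  have "((\<lambda>x. M - K / x) \<longlongrightarrow> M - 0) at_top"
    by (intro tendsto_diff tendsto_const tendsto_divide_0[OF tendsto_const]
        filterlim_at_top_imp_at_infinity filterlim_ident)
  then have "((\<lambda>x. M - K / x) \<longlongrightarrow> M) U" using tendsto_mono[OF U_le] by simp
  moreover have "eventually (\<lambda>x. M - K / x \<le> (1 / x) * primitive (f_omega \<eta> t f) x) U"
    using eventually_ge_U[of 1]
  proof (rule eventually_mono)
    fix x :: real assume x: "1 \<le> x"
    have "(M * x - K) / x \<le> primitive (f_omega \<eta> t f) x / x" using lower[of x] x by (simp add: divide_right_mono)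
    moreover have "(M * x - K) / x = M - K / x" using x by (simp add: field_simps)
    ultimately show "M - K / x \<le> (1 / x) * primitive (f_omega \<eta> t f) x" by simp
  qed
  ultimately show ?thesis using tendsto_le[OF U_nontrivial tendsto_qfun[OF f]] by blast
qed

end

lemma Q1_attains_upper_mean:
  assumes f: "f \<in> Linf"
  obtains q where "q \<in> Q1" "upper_mean f \<le> ereal (q f)"
proof -
  define M where "M = upper_mean_real f"
  obtain C where C: "C \<ge> 0" "\<And>a b. 0 \<le> a \<Longrightarrow> a \<le> b \<Longrightarrow> \<bar>primitive f b - primitive f a\<bar> \<le> C * (b - a)"
    using primitive_lipschitzE[OF f] by metis
  have attained: "\<exists>x\<ge>T. x \<ge> 0 \<and> primitive f (x + \<theta>) - primitive f x \<ge> \<theta> * (M - \<epsilon>)"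
    if "\<theta> > 0" "\<epsilon> > 0" for \<theta> \<epsilon> T
    using frequently_increment_ge_upper_mean[OF f that] unfolding M_def by metis
  define K where "K = C + \<bar>M\<bar> + 2"
  obtain ns :: "nat \<Rightarrow> nat" where ns: "\<And>k. ns k \<ge> k"
    "\<And>k y. y \<in> {0..real k} \<Longrightarrow>
       (M - 2 / (real k + 1)) * y - K \<le> primitive f (real (ns k) + y) - primitive f (real (ns k))"
    using integer_rising_point[OF C attained] unfolding K_def by metis
  define F0 where "F0 = filtermap ns sequentially"
  have "F0 \<le> sequentially"
    unfolding F0_def filterlim_def[symmetric] using ns(1)
    by (intro filterlim_at_top_mono[OF filterlim_ident]) auto
  moreover obtain \<eta> where \<eta>: "ultrafilter \<eta>" "\<eta> \<le> F0"
    using ultrafilter_exists_le[of F0] unfolding F0_def by (auto simp: filtermap_bot_iff)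
  moreover obtain U :: "real filter" where U: "ultrafilter U" "U \<le> at_top"
    using ultrafilter_exists_le[of "at_top :: real filter"] by auto
  ultimately interpret omega_mean \<eta> 0 U by unfold_locales auto
  \<comment> \<open>Along \<open>\<eta>\<close> the windows \<open>[ns k, ns k + k]\<close> grow with slope almost \<open>M\<close>; at \<open>\<omega> = (\<eta>, 0)\<close> this
    becomes the lower bound \<open>M x - K\<close> for the primitive of \<open>f_omega\<close>.\<close>
  have "M * x - K \<le> primitive (f_omega \<eta> 0 f) x" if x: "0 \<le> x" for x
  proof (rule primitive_f_omega_lower_bound[OF f x])
    fix \<delta> :: real assume \<delta>: "\<delta> > 0"
    have "eventually (\<lambda>k. (M - \<delta>) * x - K \<le> primitive f (real (ns k) + x) - primitive f (real (ns k))) sequentially"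
      using ns(2) x \<delta> by (rule eventually_increment_ge_of_rising_points)
    then have "eventually (\<lambda>n. (M - \<delta>) * x - K \<le> primitive f (real n + x) - primitive f (real n)) F0"
      by (simp add: F0_def eventually_filtermap)
    then have "eventually (\<lambda>n. (M - \<delta>) * x - K \<le> primitive f (real n + x) - primitive f (real n)) \<eta>"
      by (rule filter_leD[OF \<eta>(2)])
    then show "eventually (\<lambda>s. (M - \<delta>) * x - K \<le> primitive f (s + x) - primitive f s) \<Omega>"
      unfolding omega_filter_def eventually_filtermap by simp
  qed
  then have "M \<le> qfun \<eta> 0 U f" by (rule qfun_ge_of_lower_bound[OF f])
  moreover have "qfun \<eta> 0 U \<in> Q1" unfolding Q1_def using \<eta>(1) free U by force
  ultimately show thesis using that upper_mean_eq[OF f] unfolding M_def by auto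
qed

section \<open>M1 as a weak*-closed convex hull\<close>

lemma M1D:
  assumes "\<phi> \<in> M1"
  shows "\<And>f. f \<notin> Linf \<Longrightarrow> \<phi> f = 0"
    "\<And>f g. f \<in> Linf \<Longrightarrow> g \<in> Linf \<Longrightarrow> \<phi> (\<lambda>x. f x + g x) = \<phi> f + \<phi> g"
    "\<And>f c. f \<in> Linf \<Longrightarrow> \<phi> (\<lambda>x. c * f x) = c * \<phi> f"
    "\<And>f. f \<in> Linf \<Longrightarrow> (AE x in lebesgue. x \<ge> 0 \<longrightarrow> f x \<ge> 0) \<Longrightarrow> \<phi> f \<ge> 0"
    "\<phi> (\<lambda>_. 1) = 1"
    "\<And>f. f \<in> Linf \<Longrightarrow> \<phi> f \<le> upper_mean_real f"
  using assms unfolding M1_def by (auto simp: upper_mean_eq)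

lemma M1_const: "\<phi> \<in> M1 \<Longrightarrow> \<phi> (\<lambda>x. c) = c"
  using M1D(3)[of \<phi> "\<lambda>_. 1" c] M1D(5)[of \<phi>] Linf_const[of 1] by simp

lemma M1_sum:
  assumes \<phi>: "\<phi> \<in> M1" and I: "finite I" and g: "\<And>i. i \<in> I \<Longrightarrow> g i \<in> Linf"
  shows "\<phi> (\<lambda>x. \<Sum>i\<in>I. c i * g i x) = (\<Sum>i\<in>I. c i * \<phi> (g i))"
  using I g
proof (induction I rule: finite_induct)
  case empty
  then show ?case using M1_const[OF \<phi>, of 0] by simp
next
  case (insert i I)
  have "\<phi> (\<lambda>x. \<Sum>i\<in>insert i I. c i * g i x) = \<phi> (\<lambda>x. c i * g i x + (\<Sum>i\<in>I. c i * g i x))"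
    using insert(1,2) by simp
  also have "\<dots> = c i * \<phi> (g i) + (\<Sum>i\<in>I. c i * \<phi> (g i))"
    using insert M1D(2)[OF \<phi> Linf_cmult[of "g i"] Linf_sum[OF insert(1)]] M1D(3)[OF \<phi>] by simp
  finally show ?case using insert(1,2) by simp
qed

lemma M1_abs_le:
  assumes \<phi>: "\<phi> \<in> M1" and f: "f \<in> Linf" and K: "AE x in lebesgue. x \<ge> 0 \<longrightarrow> \<bar>f x\<bar> \<le> K"
  shows "\<bar>\<phi> f\<bar> \<le> K"
proof -
  have "0 \<le> K + s * \<phi> f" if "\<bar>s\<bar> = 1" for s
  proof -
    have "\<phi> (\<lambda>x. K + s * f x) = K + s * \<phi> f"
      using M1D(2)[OF \<phi> Linf_const Linf_cmult[OF f]] M1D(3)[OF \<phi> f] M1_const[OF \<phi>] by simp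
    moreover have "AE x in lebesgue. x \<ge> 0 \<longrightarrow> 0 \<le> K + s * f x"
      using K by eventually_elim (use that in \<open>auto simp: abs_le_iff abs_if split: if_splits\<close>)
    then have "0 \<le> \<phi> (\<lambda>x. K + s * f x)"
      by (intro M1D(4)[OF \<phi>] Linf_add Linf_const Linf_cmult f)
    ultimately show ?thesis by simp
  qed
  from this[of 1] this[of "-1"] show ?thesis by simp
qed

lemma conv_comb_mono: "S \<subseteq> T \<Longrightarrow> conv_comb S \<subseteq> conv_comb T"
  unfolding conv_comb_def by blast

lemma in_conv_comb:
  assumes "q \<in> S" shows "q \<in> conv_comb S"
proof -
  have "q = (\<lambda>f. \<Sum>i<1::nat. 1 * q f)" by simp
  with assms show ?thesis unfolding conv_comb_def by (intro CollectI exI[of _ "1::nat"]) fastforce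
qed

lemma conv_comb_convex:
  assumes a: "\<psi> \<in> conv_comb S" and b: "\<psi>' \<in> conv_comb S" and l: "0 \<le> l" "l \<le> 1"
  shows "(\<lambda>f. (1 - l) * \<psi> f + l * \<psi>' f) \<in> conv_comb S"
proof -
  obtain n :: nat and a \<phi>a where A: "\<psi> = (\<lambda>f. \<Sum>i<n. a i * \<phi>a i f)"
      "\<And>i. i < n \<Longrightarrow> 0 \<le> a i \<and> \<phi>a i \<in> S" "(\<Sum>i<n. a i) = 1"
    using a unfolding conv_comb_def by blast
  obtain m :: nat and b \<phi>b where B: "\<psi>' = (\<lambda>f. \<Sum>i<m. b i * \<phi>b i f)"
      "\<And>i. i < m \<Longrightarrow> 0 \<le> b i \<and> \<phi>b i \<in> S" "(\<Sum>i<m. b i) = 1"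
    using b unfolding conv_comb_def by blast
  have split: "(\<Sum>k<n + m. g k) = (\<Sum>k<n. g k) + (\<Sum>j<m. g (n + j))" for g :: "nat \<Rightarrow> real"
    by (induct m) (simp_all add: ac_simps)
  define c where "c k = (if k < n then (1 - l) * a k else l * b (k - n))" for k
  define \<phi>c where "\<phi>c k = (if k < n then \<phi>a k else \<phi>b (k - n))" for k
  have "(\<Sum>k<n + m. c k * \<phi>c k f) = (1 - l) * \<psi> f + l * \<psi>' f" for f
    unfolding split A(1) B(1) c_def \<phi>c_def by (simp add: sum_distrib_left mult.assoc)
  moreover have "(\<Sum>k<n + m. c k) = 1"
    unfolding split c_def using A(3) B(3) by (simp add: sum_distrib_left[symmetric])
  moreover have "\<forall>k<n + m. 0 \<le> c k \<and> \<phi>c k \<in> S"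
    using A(2) B(2) l unfolding c_def \<phi>c_def by auto
  ultimately show ?thesis unfolding conv_comb_def
    by (intro CollectI exI[of _ "n + m"] exI[of _ c] exI[of _ \<phi>c]) auto
qed

lemma conv_comb_M1_subset: "conv_comb M1 \<subseteq> M1"
proof
  fix \<psi> assume "\<psi> \<in> conv_comb M1"
  then obtain n :: nat and c \<phi>s where \<psi>: "\<psi> = (\<lambda>f. \<Sum>i<n. c i * \<phi>s i f)"
    and c: "\<And>i. i < n \<Longrightarrow> 0 \<le> c i" and \<phi>s: "\<And>i. i < n \<Longrightarrow> \<phi>s i \<in> M1" and c1: "(\<Sum>i<n. c i) = 1"
    unfolding conv_comb_def by blast
  have sum_cong: "(\<Sum>i<n. c i * \<phi>s i f) = (\<Sum>i<n. c i * r i)" if "\<And>i. i < n \<Longrightarrow> \<phi>s i f = r i" for f r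
    using that by (intro sum.cong) auto
  show "\<psi> \<in> M1"
    unfolding M1_def \<psi>
  proof (intro CollectI conjI allI impI ballI)
    fix f g :: "real \<Rightarrow> real" assume f: "f \<in> Linf" and g: "g \<in> Linf"
    show "(\<Sum>i<n. c i * \<phi>s i (\<lambda>x. f x + g x)) = (\<Sum>i<n. c i * \<phi>s i f) + (\<Sum>i<n. c i * \<phi>s i g)"
      using sum_cong[of "\<lambda>x. f x + g x"] M1D(2)[OF \<phi>s f g] by (simp add: distrib_left sum.distrib)
  next
    fix f :: "real \<Rightarrow> real" and a :: real assume f: "f \<in> Linf"
    show "(\<Sum>i<n. c i * \<phi>s i (\<lambda>x. a * f x)) = a * (\<Sum>i<n. c i * \<phi>s i f)"
      using sum_cong[of "\<lambda>x. a * f x"] M1D(3)[OF \<phi>s f] by (simp add: sum_distrib_left ac_simps)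
  next
    fix f :: "real \<Rightarrow> real" assume f: "f \<in> Linf"
    have "(\<Sum>i<n. c i * \<phi>s i f) \<le> (\<Sum>i<n. c i * upper_mean_real f)"
      using M1D(6)[OF \<phi>s f] c by (intro sum_mono mult_left_mono) auto
    then show "ereal (\<Sum>i<n. c i * \<phi>s i f) \<le> upper_mean f"
      using c1 upper_mean_eq[OF f] by (simp add: sum_distrib_right[symmetric])
  next
    fix f :: "real \<Rightarrow> real" assume "f \<notin> Linf"
    then show "(\<Sum>i<n. c i * \<phi>s i f) = 0" using M1D(1)[OF \<phi>s] by simp
  next
    fix f :: "real \<Rightarrow> real" assume "f \<in> Linf" "AE x in lebesgue. 0 \<le> x \<longrightarrow> 0 \<le> f x"
    then show "0 \<le> (\<Sum>i<n. c i * \<phi>s i f)" using M1D(4)[OF \<phi>s] c by (intro sum_nonneg) simp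
  next
    show "(\<Sum>i<n. c i * \<phi>s i (\<lambda>_. 1)) = 1" using M1D(5)[OF \<phi>s] c1 by simp
  qed
qed

lemma conv_comb_Q1_subset_M1: "conv_comb Q1 \<subseteq> M1"
  using conv_comb_mono[OF Q1_subset_M1] conv_comb_M1_subset by blast

lemma abs_sum_list_diff_le:
  fixes cfs :: "(real \<times> 'a) list"
  assumes "\<And>c f. (c, f) \<in> set cfs \<Longrightarrow> \<bar>\<phi> f - \<psi> f\<bar> \<le> \<delta>"
  shows "\<bar>(\<Sum>(c, f)\<leftarrow>cfs. c * \<phi> f) - (\<Sum>(c, f)\<leftarrow>cfs. c * \<psi> f)\<bar> \<le> (\<Sum>(c, f)\<leftarrow>cfs. \<bar>c\<bar>) * \<delta>"
  using assms
proof (induction cfs)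
  case Nil then show ?case by simp
next
  case (Cons cf cfs)
  obtain c f where cf: "cf = (c, f)" by force
  let ?D = "(\<Sum>(c, f)\<leftarrow>cfs. c * \<phi> f) - (\<Sum>(c, f)\<leftarrow>cfs. c * \<psi> f)"
  have "\<bar>(c * \<phi> f - c * \<psi> f) + ?D\<bar> \<le> \<bar>c * \<phi> f - c * \<psi> f\<bar> + \<bar>?D\<bar>" by (rule abs_triangle_ineq)
  also have "\<dots> \<le> \<bar>c\<bar> * \<delta> + (\<Sum>(c, f)\<leftarrow>cfs. \<bar>c\<bar>) * \<delta>"
  proof (rule add_mono)
    show "\<bar>c * \<phi> f - c * \<psi> f\<bar> \<le> \<bar>c\<bar> * \<delta>"
      using Cons.prems[of c f] unfolding cf
      by (simp add: abs_mult mult_left_mono flip: right_diff_distrib)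
    show "\<bar>?D\<bar> \<le> (\<Sum>(c, f)\<leftarrow>cfs. \<bar>c\<bar>) * \<delta>" by (rule Cons.IH) (use Cons.prems in auto)
  qed
  finally show ?case unfolding cf by (simp add: distrib_right add_diff_add)
qed

text \<open>Every condition defining \<open>M1\<close> is a linear inequality in finitely many values of the
  functional, and such inequalities survive weak* limits.\<close>

lemma wstar_closure_sum_list_le:
  assumes \<psi>: "\<psi> \<in> wstar_closure S"
    and cfs: "\<And>c f. (c, f) \<in> set cfs \<Longrightarrow> f \<in> Linf"
    and le: "\<And>\<phi>. \<phi> \<in> S \<Longrightarrow> (\<Sum>(c, f)\<leftarrow>cfs. c * \<phi> f) \<le> b"
  shows "(\<Sum>(c, f)\<leftarrow>cfs. c * \<psi> f) \<le> b"
proof (rule field_le_epsilon)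
  fix e :: real assume e: "0 < e"
  define A where "A = (\<Sum>(c, f)\<leftarrow>cfs. \<bar>c\<bar>)"
  have A: "0 \<le> A" unfolding A_def by (rule sum_list_nonneg) auto
  have "snd ` set cfs \<subseteq> Linf"
  proof (rule image_subsetI)
    fix cf assume "cf \<in> set cfs"
    then show "snd cf \<in> Linf" using cfs[of "fst cf" "snd cf"] by simp
  qed
  moreover have "e / (A + 1) > 0" using e A by simp
  moreover have "finite (snd ` set cfs)" by simp
  ultimately have "\<exists>\<phi>\<in>S. \<forall>f\<in>snd ` set cfs. \<bar>\<phi> f - \<psi> f\<bar> < e / (A + 1)"
    using \<psi> unfolding wstar_closure_def by blast
  then obtain \<phi> where \<phi>: "\<phi> \<in> S" "\<And>f. f \<in> snd ` set cfs \<Longrightarrow> \<bar>\<phi> f - \<psi> f\<bar> < e / (A + 1)"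
    by blast
  have "\<bar>\<phi> f - \<psi> f\<bar> \<le> e / (A + 1)" if "(c, f) \<in> set cfs" for c f
    using \<phi>(2)[OF rev_image_eqI[OF that]] by simp
  then have "\<bar>(\<Sum>(c, f)\<leftarrow>cfs. c * \<phi> f) - (\<Sum>(c, f)\<leftarrow>cfs. c * \<psi> f)\<bar> \<le> A * (e / (A + 1))"
    unfolding A_def by (rule abs_sum_list_diff_le)
  also have "\<dots> \<le> e" using A e by (simp add: field_simps)
  finally show "(\<Sum>(c, f)\<leftarrow>cfs. c * \<psi> f) \<le> b + e" using le[OF \<phi>(1)] by linarith
qed

lemma wstar_closure_sum_list_eq:
  assumes \<psi>: "\<psi> \<in> wstar_closure S"
    and cfs: "\<And>c f. (c, f) \<in> set cfs \<Longrightarrow> f \<in> Linf"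
    and eq: "\<And>\<phi>. \<phi> \<in> S \<Longrightarrow> (\<Sum>(c, f)\<leftarrow>cfs. c * \<phi> f) = b"
  shows "(\<Sum>(c, f)\<leftarrow>cfs. c * \<psi> f) = b"
proof -
  have neg: "(\<Sum>(c, f)\<leftarrow>map (\<lambda>(c, f). (- c, f)) cfs. c * \<phi> f) = - (\<Sum>(c, f)\<leftarrow>cfs. c * \<phi> f)"
    for \<phi> :: "(real \<Rightarrow> real) \<Rightarrow> real"
    by (induction cfs) auto
  have "(\<Sum>(c, f)\<leftarrow>cfs. c * \<psi> f) \<le> b"
  proof (rule wstar_closure_sum_list_le[OF \<psi>])
    show "f \<in> Linf" if "(c, f) \<in> set cfs" for c f using cfs that .
    show "(\<Sum>(c, f)\<leftarrow>cfs. c * \<phi> f) \<le> b" if "\<phi> \<in> S" for \<phi> using eq[OF that] by simp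
  qed
  moreover have "(\<Sum>(c, f)\<leftarrow>map (\<lambda>(c, f). (- c, f)) cfs. c * \<psi> f) \<le> - b"
  proof (rule wstar_closure_sum_list_le[OF \<psi>])
    show "f \<in> Linf" if "(c, f) \<in> set (map (\<lambda>(c, f). (- c, f)) cfs)" for c f using cfs that by auto
    show "(\<Sum>(c, f)\<leftarrow>map (\<lambda>(c, f). (- c, f)) cfs. c * \<phi> f) \<le> - b" if "\<phi> \<in> S" for \<phi>
      unfolding neg using eq[OF that] by simp
  qed
  ultimately show ?thesis unfolding neg by linarith
qed

lemma wstar_closure_M1_subset:
  assumes S: "S \<subseteq> M1"
  shows "wstar_closure S \<subseteq> M1"
proof
  fix \<psi> assume \<psi>: "\<psi> \<in> wstar_closure S"
  note le = wstar_closure_sum_list_le[OF \<psi>] and eq = wstar_closure_sum_list_eq[OF \<psi>]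
  have M1: "\<phi> \<in> M1" if "\<phi> \<in> S" for \<phi> using S that by blast
  show "\<psi> \<in> M1"
    unfolding M1_def
  proof (intro CollectI conjI allI impI ballI)
    show "\<psi> f = 0" if "f \<notin> Linf" for f using \<psi> that unfolding wstar_closure_def by blast
  next
    fix f g :: "real \<Rightarrow> real" assume f: "f \<in> Linf" and g: "g \<in> Linf"
    have "(\<Sum>(c, h)\<leftarrow>[(1, \<lambda>x. f x + g x), (-1, f), (-1, g)]. c * \<psi> h) = 0"
      by (rule eq) (auto simp: f g Linf_add[OF f g] M1D(2)[OF M1 f g])
    then show "\<psi> (\<lambda>x. f x + g x) = \<psi> f + \<psi> g" by simp
  next
    fix f :: "real \<Rightarrow> real" and a :: real assume f: "f \<in> Linf"
    have "(\<Sum>(c, h)\<leftarrow>[(1, \<lambda>x. a * f x), (-a, f)]. c * \<psi> h) = 0"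
      by (rule eq) (auto simp: f Linf_cmult[OF f] M1D(3)[OF M1 f])
    then show "\<psi> (\<lambda>x. a * f x) = a * \<psi> f" by simp
  next
    fix f :: "real \<Rightarrow> real" assume f: "f \<in> Linf" and pos: "AE x in lebesgue. 0 \<le> x \<longrightarrow> 0 \<le> f x"
    have "(\<Sum>(c, h)\<leftarrow>[(-1, f)]. c * \<psi> h) \<le> 0"
      by (rule le) (auto simp: f M1D(4)[OF M1 f pos])
    then show "0 \<le> \<psi> f" by simp
  next
    have "(\<Sum>(c, h)\<leftarrow>[(1, \<lambda>_. 1)]. c * \<psi> h) = 1"
      by (rule eq) (auto simp: Linf_const M1D(5)[OF M1])
    then show "\<psi> (\<lambda>_. 1) = 1" by simp
  next
    fix f :: "real \<Rightarrow> real" assume f: "f \<in> Linf"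
    have "(\<Sum>(c, h)\<leftarrow>[(1, f)]. c * \<psi> h) \<le> upper_mean_real f"
      by (rule le) (auto simp: f M1D(6)[OF M1 f])
    then show "ereal (\<psi> f) \<le> upper_mean f" using upper_mean_eq[OF f] by simp
  qed
qed

lemma sum_power2_convex_comb:
  fixes a b p :: "'a \<Rightarrow> real"
  shows "(\<Sum>f\<in>F. ((1 - l) * a f + l * b f - p f)\<^sup>2) =
    (\<Sum>f\<in>F. (a f - p f)\<^sup>2) + 2 * l * (\<Sum>f\<in>F. (a f - p f) * (b f - a f)) + l\<^sup>2 * (\<Sum>f\<in>F. (b f - a f)\<^sup>2)"
proof -
  have "((1 - l) * a f + l * b f - p f)\<^sup>2 =
      (a f - p f)\<^sup>2 + 2 * l * ((a f - p f) * (b f - a f)) + l\<^sup>2 * (b f - a f)\<^sup>2" for f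
    by (simp add: power2_eq_square algebra_simps)
  then show ?thesis by (simp add: sum.distrib sum_distrib_left)
qed

lemma approx_nearest_point:
  fixes S :: "('a \<Rightarrow> real) set" and F :: "'a set" and \<phi> :: "'a \<Rightarrow> real"
  assumes F: "finite F" and S: "S \<noteq> {}"
    and far: "\<And>\<psi>. \<psi> \<in> S \<Longrightarrow> \<exists>f\<in>F. \<epsilon> \<le> \<bar>\<psi> f - \<phi> f\<bar>" and \<epsilon>: "\<epsilon> > 0"
    and slack: "\<And>x. 0 < x \<Longrightarrow> 0 < h x"
  obtains d \<psi>0 where "0 < d" "\<And>\<psi>. \<psi> \<in> S \<Longrightarrow> d \<le> (\<Sum>f\<in>F. (\<psi> f - \<phi> f)\<^sup>2)"
    "\<psi>0 \<in> S" "(\<Sum>f\<in>F. (\<psi>0 f - \<phi> f)\<^sup>2) < d + h d"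
proof -
  define dist2 where "dist2 \<psi> = (\<Sum>f\<in>F. (\<psi> f - \<phi> f)\<^sup>2)" for \<psi> :: "'a \<Rightarrow> real"
  have dist2_ge: "\<epsilon>\<^sup>2 \<le> dist2 \<psi>" if \<psi>: "\<psi> \<in> S" for \<psi>
  proof -
    obtain f where f: "f \<in> F" "\<epsilon> \<le> \<bar>\<psi> f - \<phi> f\<bar>" using far[OF \<psi>] by blast
    have "\<epsilon>\<^sup>2 \<le> (\<psi> f - \<phi> f)\<^sup>2" using f(2) \<epsilon> by (metis abs_ge_zero order_less_imp_le power2_abs power_mono)
    also have "\<dots> \<le> dist2 \<psi>" unfolding dist2_def by (rule member_le_sum) (use f F in auto)
    finally show ?thesis .
  qed
  define d where "d = Inf (dist2 ` S)"
  have "bdd_below (dist2 ` S)" using dist2_ge by (intro bdd_belowI[of _ "\<epsilon>\<^sup>2"]) auto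
  then have d_le: "d \<le> dist2 \<psi>" if "\<psi> \<in> S" for \<psi> unfolding d_def using that by (intro cInf_lower) auto
  have "\<epsilon>\<^sup>2 \<le> d" unfolding d_def using S dist2_ge by (intro cInf_greatest) auto
  then have d0: "0 < d" using \<epsilon> by (smt (verit) zero_less_power)
  have "Inf (dist2 ` S) < d + h d" using slack[OF d0] unfolding d_def[symmetric] by simp
  then have "\<exists>x\<in>dist2 ` S. x < d + h d" using S by (intro cInf_lessD) auto
  then obtain \<psi>0 where "\<psi>0 \<in> S" "dist2 \<psi>0 < d + h d" by auto
  with d0 d_le show thesis unfolding dist2_def by (intro that) auto
qed

text \<open>For an approximate nearest point \<open>\<psi>0\<close> of \<open>S\<close> to \<open>\<phi>\<close>, the direction \<open>\<phi> - \<psi>0\<close> separates.\<close>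

lemma convex_separation:
  fixes S :: "('a \<Rightarrow> real) set" and F :: "'a set" and \<phi> :: "'a \<Rightarrow> real"
  assumes F: "finite F" and S: "S \<noteq> {}"
    and convex: "\<And>\<psi> \<psi>' l. \<psi> \<in> S \<Longrightarrow> \<psi>' \<in> S \<Longrightarrow> 0 \<le> l \<Longrightarrow> l \<le> 1 \<Longrightarrow> (\<lambda>f. (1 - l) * \<psi> f + l * \<psi>' f) \<in> S"
    and bounded: "\<And>\<psi> f. \<psi> \<in> S \<Longrightarrow> f \<in> F \<Longrightarrow> \<bar>\<psi> f\<bar> \<le> K f"
    and far: "\<And>\<psi>. \<psi> \<in> S \<Longrightarrow> \<exists>f\<in>F. \<epsilon> \<le> \<bar>\<psi> f - \<phi> f\<bar>" and \<epsilon>: "\<epsilon> > 0"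
  obtains c where "\<And>\<psi>. \<psi> \<in> S \<Longrightarrow> (\<Sum>f\<in>F. c f * (\<psi> f - \<phi> f)) < 0"
proof -
  define B where "B = (\<Sum>f\<in>F. (2 * K f)\<^sup>2)"
  have B0: "B \<ge> 0" unfolding B_def by (intro sum_nonneg) auto
  have B: "(\<Sum>f\<in>F. (\<psi>' f - \<psi> f)\<^sup>2) \<le> B" if "\<psi> \<in> S" "\<psi>' \<in> S" for \<psi> \<psi>'
    unfolding B_def
  proof (rule sum_mono)
    fix f assume f: "f \<in> F"
    have "\<bar>\<psi>' f - \<psi> f\<bar> \<le> 2 * K f" using bounded[OF that(1) f] bounded[OF that(2) f] by linarith
    then show "(\<psi>' f - \<psi> f)\<^sup>2 \<le> (2 * K f)\<^sup>2" by (metis abs_ge_zero power2_abs power_mono)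
  qed
  define step where "step x = min 1 (x / (2 * B + 1))" for x
  obtain d \<psi>0 where d0: "0 < d" and d_le: "\<And>\<psi>. \<psi> \<in> S \<Longrightarrow> d \<le> (\<Sum>f\<in>F. (\<psi> f - \<phi> f)\<^sup>2)"
    and \<psi>0: "\<psi>0 \<in> S" "(\<Sum>f\<in>F. (\<psi>0 f - \<phi> f)\<^sup>2) < d + step d * d / 2"
    by (rule approx_nearest_point[OF F S far \<epsilon>, of "\<lambda>x. step x * x / 2"])
      (use B0 in \<open>auto simp: step_def\<close>)
  define l where "l = step d"
  have l0: "0 < l" "l \<le> 1" unfolding l_def step_def using d0 B0 by auto
  have lB: "l * B \<le> d / 2"
  proof -
    have "l * B \<le> d / (2 * B + 1) * B" unfolding l_def step_def using B0 by (intro mult_right_mono) auto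
    also have "\<dots> \<le> d / 2" using d0 B0 by (simp add: field_simps)
    finally show ?thesis .
  qed
  \<comment> \<open>A step of size \<open>l\<close> from \<open>\<psi>0\<close> towards any \<open>\<psi>\<close> stays in \<open>S\<close>, so cannot decrease the distance
    by more than the slack \<open>l d / 2\<close> of \<open>\<psi>0\<close>.\<close>
  show thesis
  proof (rule that[of "\<lambda>f. \<phi> f - \<psi>0 f"])
    fix \<psi> assume \<psi>: "\<psi> \<in> S"
    define D0 where "D0 = (\<Sum>f\<in>F. (\<psi>0 f - \<phi> f)\<^sup>2)"
    define P where "P = (\<Sum>f\<in>F. (\<psi>0 f - \<phi> f) * (\<psi> f - \<psi>0 f))"
    define V where "V = (\<Sum>f\<in>F. (\<psi> f - \<psi>0 f)\<^sup>2)"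
    have "d \<le> (\<Sum>f\<in>F. ((1 - l) * \<psi>0 f + l * \<psi> f - \<phi> f)\<^sup>2)"
      using d_le[OF convex[OF \<psi>0(1) \<psi>]] l0 by simp
    also have "\<dots> = D0 + 2 * l * P + l\<^sup>2 * V"
      unfolding D0_def P_def V_def by (rule sum_power2_convex_comb)
    finally have step: "d \<le> D0 + 2 * l * P + l\<^sup>2 * V" .
    have "l\<^sup>2 * V \<le> l * (l * B)"
      using B[OF \<psi>0(1) \<psi>] l0 unfolding V_def by (simp add: power2_eq_square mult_left_mono)
    also have "\<dots> \<le> l * (d / 2)" using lB l0 by (intro mult_left_mono) auto
    finally have "0 < l * (2 * P + d)" using step \<psi>0(2) unfolding D0_def l_def by (simp add: algebra_simps)
    then have "2 * P + d > 0" using l0 by (simp add: zero_less_mult_iff)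
    moreover have "(\<Sum>f\<in>F. (\<phi> f - \<psi>0 f) * (\<psi> f - \<phi> f)) = - P - D0"
      unfolding P_def D0_def
      by (simp add: power2_eq_square algebra_simps sum_subtractf sum_negf flip: sum.distrib)
    ultimately show "(\<Sum>f\<in>F. (\<phi> f - \<psi>0 f) * (\<psi> f - \<phi> f)) < 0" using d_le[OF \<psi>0(1)] d0 unfolding D0_def by linarith
  qed
qed

lemma M1_subset_wstar_closure: "M1 \<subseteq> wstar_closure (conv_comb Q1)"
proof
  fix \<phi> assume \<phi>: "\<phi> \<in> M1"
  show "\<phi> \<in> wstar_closure (conv_comb Q1)"
    unfolding wstar_closure_def
  proof (intro CollectI conjI allI impI)
    show "\<phi> f = 0" if "f \<notin> Linf" for f using M1D(1)[OF \<phi> that] .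
  next
    fix Fs :: "(real \<Rightarrow> real) set" and \<epsilon> :: real
    assume "finite Fs \<and> Fs \<subseteq> Linf" and \<epsilon>: "0 < \<epsilon>"
    then have Fs: "finite Fs" "Fs \<subseteq> Linf" by auto
    show "\<exists>\<psi>\<in>conv_comb Q1. \<forall>f\<in>Fs. \<bar>\<psi> f - \<phi> f\<bar> < \<epsilon>"
    proof (rule ccontr)
      assume "\<not> ?thesis"
      then have far: "\<exists>f\<in>Fs. \<epsilon> \<le> \<bar>\<psi> f - \<phi> f\<bar>" if "\<psi> \<in> conv_comb Q1" for \<psi>
        using that by (auto simp: not_less)
      obtain q0 where "q0 \<in> Q1" using Q1_attains_upper_mean[OF Linf_const[of 0]] by blast
      then have nonempty: "conv_comb Q1 \<noteq> {}" using in_conv_comb by blast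
      have "\<forall>f\<in>Fs. \<exists>K. AE x in lebesgue. x \<ge> 0 \<longrightarrow> \<bar>f x\<bar> \<le> K" using Fs(2) unfolding Linf_def by blast
      then obtain K where K: "\<And>f. f \<in> Fs \<Longrightarrow> AE x in lebesgue. x \<ge> 0 \<longrightarrow> \<bar>f x\<bar> \<le> K f" by metis
      have bounded: "\<bar>\<psi> f\<bar> \<le> K f" if "\<psi> \<in> conv_comb Q1" "f \<in> Fs" for \<psi> f
        using M1_abs_le[OF _ _ K[OF that(2)]] conv_comb_Q1_subset_M1 that Fs(2) by blast
      obtain c where c: "\<And>\<psi>. \<psi> \<in> conv_comb Q1 \<Longrightarrow> (\<Sum>f\<in>Fs. c f * (\<psi> f - \<phi> f)) < 0"
      proof (rule convex_separation[where S = "conv_comb Q1" and F = Fs and K = K and \<phi> = \<phi> and \<epsilon> = \<epsilon>])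
        show "(\<lambda>f. (1 - l) * \<psi> f + l * \<psi>' f) \<in> conv_comb Q1"
          if "\<psi> \<in> conv_comb Q1" "\<psi>' \<in> conv_comb Q1" "0 \<le> l" "l \<le> 1" for \<psi> \<psi>' l
          using that by (rule conv_comb_convex)
        show "\<bar>\<psi> f\<bar> \<le> K f" if "\<psi> \<in> conv_comb Q1" "f \<in> Fs" for \<psi> f using that by (rule bounded)
        show "\<exists>f\<in>Fs. \<epsilon> \<le> \<bar>\<psi> f - \<phi> f\<bar>" if "\<psi> \<in> conv_comb Q1" for \<psi> using that by (rule far)
      qed (use Fs(1) nonempty \<epsilon> that in auto)
      \<comment> \<open>Test the separating direction \<open>g\<close> against a functional of \<open>Q1\<close> attaining its upper mean.\<close>
      define g where "g x = (\<Sum>f\<in>Fs. c f * f x)" for x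
      have g: "g \<in> Linf" unfolding g_def using Linf_sum[OF Fs(1), of "\<lambda>f. f" c] Fs(2) by auto
      obtain q where q: "q \<in> Q1" "upper_mean g \<le> ereal (q g)" using Q1_attains_upper_mean[OF g] by blast
      have qM1: "q \<in> M1" using Q1_subset_M1 q(1) by blast
      have g_value: "\<psi> g = (\<Sum>f\<in>Fs. c f * \<psi> f)" if "\<psi> \<in> M1" for \<psi>
        unfolding g_def using M1_sum[OF that Fs(1), of "\<lambda>f. f" c] Fs(2) by blast
      have "\<phi> g \<le> q g" using M1D(6)[OF \<phi> g] q(2) upper_mean_eq[OF g] by simp
      moreover have "q g - \<phi> g = (\<Sum>f\<in>Fs. c f * (q f - \<phi> f))"
        by (simp add: g_value[OF qM1] g_value[OF \<phi>] sum_subtractf right_diff_distrib)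
      moreover have "(\<Sum>f\<in>Fs. c f * (q f - \<phi> f)) < 0" using c in_conv_comb[OF q(1)] by blast
      ultimately show False by simp
    qed
  qed
qed

theorem theorem3p8:
  shows "M1 = wstar_closure (conv_comb Q1)"
  using M1_subset_wstar_closure wstar_closure_M1_subset[OF conv_comb_Q1_subset_M1] by blast

end
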